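(* Fix $\alpha\in(0,1)$. The functionals $(\eta,\nu)\mapsto\mathrm{KL}_{\inf}^{\mathrm U}(\eta,\nu)$ and $(\eta,\nu)\mapsto\mathrm{KL}_{\inf}^{\mathrm L}(\eta,\nu)$ are jointly lower semicontinuous on $\mathcal P([0,1])\times(0,1)$, where $\mathcal P([0,1])$ carries the weak topology.
   Context: $\mathcal P([0,1])$ is the set of Borel probability measures on $[0,1]$. Let $\rho:=-\log(1-\alpha)$ and $\mathrm{EVaR}_\alpha(\kappa):=\inf_{z>0}\frac1z(\log\mathbb E_\kappa[e^{zX}]+\rho)$ for $X\sim\kappa$. $\mathrm{KL}(\eta\Vert\kappa)=\int\log\frac{d\eta}{d\kappa}d\eta$ if $\eta\ll\kappa$, $+\infty$ otherwise. $\mathrm{KL}_{\inf}^{\mathrm U}(\eta,\nu):=\min\{\mathrm{KL}(\eta\Vert\kappa):\kappa\in\mathcal P([0,1]),\mathrm{EVaR}_\alpha(\kappa)\ge\nu\}$, $\mathrm{KL}_{\inf}^{\mathrm L}(\eta,\nu):=\min\{\mathrm{KL}(\eta\Vert\kappa):\kappa\in\mathcal P([0,1]),\mathrm{EVaR}_\alpha(\kappa)\le\nu\}$. A function $f$ is lower semicontinuous if $f(p)\le\liminf_n f(p_n)$ whenever $p_n\to p$. *)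

theory Defs
  imports "HOL-Probability.Probability"
begin

text \<open>Borel probability measures on [0,1], realised as Borel probability
  measures on the real line concentrated on [0,1].\<close>
definition P01 :: "real measure set" where
  "P01 = {M. prob_space M \<and> sets M = sets borel \<and> emeasure M {0..1} = 1}"

definition weak_conv01 :: "(nat \<Rightarrow> real measure) \<Rightarrow> real measure \<Rightarrow> bool" where
  "weak_conv01 Ms M \<longleftrightarrow>
     (\<forall>f :: real \<Rightarrow> real. continuous_on {0..1} f \<longrightarrow>
        (\<lambda>n. LINT x:{0..1}|Ms n. f x) \<longlonglongrightarrow> (LINT x:{0..1}|M. f x))"

definition rho :: "real \<Rightarrow> real" where
  "rho \<alpha> = - ln (1 - \<alpha>)"

definition EVaR :: "real \<Rightarrow> real measure \<Rightarrow> real" where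
  "EVaR \<alpha> \<kappa> = Inf ((\<lambda>z. (ln (\<integral>x. exp (z * x) \<partial>\<kappa>) + rho \<alpha>) / z) ` {0<..})"

definition KL :: "real measure \<Rightarrow> real measure \<Rightarrow> ereal" where
  "KL \<eta> \<kappa> =
     (if absolutely_continuous \<kappa> \<eta> then
        (let f = (\<lambda>x. enn2real (RN_deriv \<kappa> \<eta> x)) in
          enn2ereal (\<integral>\<^sup>+ x. ennreal (max 0 (ln (f x))) \<partial>\<eta>)
          - enn2ereal (\<integral>\<^sup>+ x. ennreal (max 0 (- ln (f x))) \<partial>\<eta>))
      else \<infinity>)"

definition KLinf_U :: "real \<Rightarrow> real measure \<Rightarrow> real \<Rightarrow> ereal" where
  "KLinf_U \<alpha> \<eta> \<nu> = Inf {KL \<eta> \<kappa> | \<kappa>. \<kappa> \<in> P01 \<and> EVaR \<alpha> \<kappa> \<ge> \<nu>}"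

definition KLinf_L :: "real \<Rightarrow> real measure \<Rightarrow> real \<Rightarrow> ereal" where
  "KLinf_L \<alpha> \<eta> \<nu> = Inf {KL \<eta> \<kappa> | \<kappa>. \<kappa> \<in> P01 \<and> EVaR \<alpha> \<kappa> \<le> \<nu>}"

end

theory Submission
  imports Defs
begin

(* P([0,1]) is sequentially compact for weak convergence (Helly), and the constraint sets
   {EVaR >= nu} and {EVaR <= nu} are closed under joint limits of (kappa, nu): EVaR is the
   infimum over z > 0 of (ln E[exp (z X)] + rho) / z, each of which is continuous in kappa, so
   it is upper semicontinuous; on [0,1] the infimum is governed by a compact range of z
   (rho / z is large for small z, ln E[exp (z X)] / z is nondecreasing), so it is also lower
   semicontinuous. KL is jointly lower semicontinuous, being by the Donsker-Varadhan formula the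
   supremum of  int g d eta - ln int exp g d kappa  over bounded continuous g. Hence near-optimal
   kappa_n for (eta_n, nu_n) have a weakly convergent subsequence whose limit is admissible for
   (eta, nu) and satisfies KL(eta || kappa) <= liminf KL(eta_n || kappa_n). *)

section \<open>Measures on \<open>[0,1]\<close> and weak convergence\<close>

lemma P01_iff: "M \<in> P01 \<longleftrightarrow> real_distribution M \<and> (AE x in M. x \<in> {0..1})"
proof -
  have "emeasure M {0..1} = 1 \<longleftrightarrow> (AE x in M. x \<in> {0..1})" if "real_distribution M"
  proof -
    interpret real_distribution M by fact
    show ?thesis by (subst AE_in_set_eq_1) (auto simp: emeasure_eq_measure)
  qed
  then show ?thesis
    unfolding P01_def real_distribution_def real_distribution_axioms_def by blast
qed

lemma P01_real_distribution: "M \<in> P01 \<Longrightarrow> real_distribution M"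
  and P01_AE_unit_interval: "M \<in> P01 \<Longrightarrow> AE x in M. x \<in> {0..1}"
  by (simp_all add: P01_iff)

lemma bounded_on_unit_interval:
  fixes g :: "real \<Rightarrow> real"
  assumes "continuous_on UNIV g"
  obtains B where "\<And>x. x \<in> {0..1} \<Longrightarrow> \<bar>g x\<bar> \<le> B"
proof -
  have "compact (g ` {0..1})"
    by (rule compact_continuous_image) (use assms continuous_on_subset in auto)
  then obtain B where "\<forall>y\<in>g ` {0..1}. norm y \<le> B"
    by (auto dest!: compact_imp_bounded simp: bounded_iff)
  then show ?thesis by (intro that[of B]) auto
qed

lemma integrable_P01_continuous:
  fixes g :: "real \<Rightarrow> real"
  assumes "M \<in> P01" "continuous_on UNIV g"
  shows "integrable M g"
proof -
  interpret real_distribution M using assms(1) by (rule P01_real_distribution)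
  obtain B where B: "\<And>x. x \<in> {0..1} \<Longrightarrow> \<bar>g x\<bar> \<le> B"
    using bounded_on_unit_interval[OF assms(2)] by blast
  have "AE x in M. norm (g x) \<le> B"
    using P01_AE_unit_interval[OF assms(1)] by eventually_elim (simp add: B)
  moreover have "g \<in> borel_measurable M"
    using assms(2) by (simp add: borel_measurable_continuous_onI)
  ultimately show ?thesis by (rule integrable_const_bound)
qed

lemma integral_P01_cong:
  fixes g h :: "real \<Rightarrow> real"
  assumes "M \<in> P01" "\<And>x. x \<in> {0..1} \<Longrightarrow> g x = h x"
    and "g \<in> borel_measurable borel" "h \<in> borel_measurable borel"
  shows "(\<integral>x. g x \<partial>M) = (\<integral>x. h x \<partial>M)"
proof -
  interpret real_distribution M using assms(1) by (rule P01_real_distribution)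
  have "AE x in M. g x = h x"
    using P01_AE_unit_interval[OF assms(1)] by eventually_elim (rule assms(2))
  then show ?thesis
    using assms(3,4) by (intro integral_cong_AE) simp_all
qed

text \<open>Weak convergence tested with functions that are continuous on the whole line: unlike the
  test functions of \<^const>\<open>weak_conv01\<close>, these are Borel measurable.\<close>
definition weak_conv_cont :: "(nat \<Rightarrow> real measure) \<Rightarrow> real measure \<Rightarrow> bool" where
  "weak_conv_cont Ms M \<longleftrightarrow>
     (\<forall>g :: real \<Rightarrow> real. continuous_on UNIV g \<longrightarrow> (\<lambda>n. \<integral>x. g x \<partial>Ms n) \<longlonglongrightarrow> (\<integral>x. g x \<partial>M))"

lemma weak_conv_contD:
  fixes g :: "real \<Rightarrow> real"
  assumes "weak_conv_cont Ms M" "continuous_on UNIV g"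
  shows "(\<lambda>n. \<integral>x. g x \<partial>Ms n) \<longlonglongrightarrow> (\<integral>x. g x \<partial>M)"
  using assms unfolding weak_conv_cont_def by blast

lemma weak_conv01_imp_weak_conv_cont:
  assumes "weak_conv01 Ms M" "M \<in> P01" "\<And>n. Ms n \<in> P01"
  shows "weak_conv_cont Ms M"
  unfolding weak_conv_cont_def
proof (intro allI impI)
  fix g :: "real \<Rightarrow> real" assume g: "continuous_on UNIV g"
  have gm: "g \<in> borel_measurable borel" using g by (rule borel_measurable_continuous_onI)
  have "(LINT x:{0..1}|N. g x) = (\<integral>x. g x \<partial>N)" if "N \<in> P01" for N
    unfolding set_lebesgue_integral_def using that gm
    by (intro integral_P01_cong) (auto simp: indicator_def)
  moreover have "(\<lambda>n. LINT x:{0..1}|Ms n. g x) \<longlonglongrightarrow> (LINT x:{0..1}|M. g x)"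
    using assms(1) continuous_on_subset[OF g, of "{0..1}"] unfolding weak_conv01_def
    by (elim allE[of _ g] impE) simp_all
  ultimately show "(\<lambda>n. \<integral>x. g x \<partial>Ms n) \<longlonglongrightarrow> (\<integral>x. g x \<partial>M)"
    using assms(2,3) by simp
qed

lemma weak_conv_cont_subseq:
  assumes "weak_conv_cont Ms M" "strict_mono r"
  shows "weak_conv_cont (Ms \<circ> r) M"
  unfolding weak_conv_cont_def
proof (intro allI impI)
  fix g :: "real \<Rightarrow> real" assume "continuous_on UNIV g"
  from LIMSEQ_subseq_LIMSEQ[OF weak_conv_contD[OF assms(1) this] assms(2)]
  show "(\<lambda>n. \<integral>x. g x \<partial>(Ms \<circ> r) n) \<longlonglongrightarrow> (\<integral>x. g x \<partial>M)" by (simp add: o_def)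
qed

definition clamp01 :: "real \<Rightarrow> real" where
  "clamp01 x = max 0 (min 1 x)"

lemma continuous_on_clamp01: "continuous_on UNIV clamp01"
  unfolding clamp01_def by (intro continuous_intros)

lemma clamp01_id: "x \<in> {0..1} \<Longrightarrow> clamp01 x = x"
  and clamp01_in_unit_interval: "clamp01 x \<in> {0..1}"
  by (auto simp: clamp01_def)

lemma continuous_on_comp_clamp01:
  "continuous_on UNIV g \<Longrightarrow> continuous_on UNIV (\<lambda>x. g (clamp01 x))"
  using continuous_on_compose2[OF _ continuous_on_clamp01] by blast

lemma tight_P01: "(\<And>n. Ms n \<in> P01) \<Longrightarrow> tight Ms"
proof -
  assume P: "\<And>n. Ms n \<in> P01"
  have "1 - e < measure (Ms n) {-1<..1}" if "0 < e" for n and e :: real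
  proof -
    interpret real_distribution "Ms n" using P by (rule P01_real_distribution)
    have "prob {0..1} = 1"
      using P01_AE_unit_interval[OF P[of n]] by (subst (asm) AE_in_set_eq_1) auto
    moreover have "prob {0..1} \<le> prob {-1<..1}" by (intro finite_measure_mono) auto
    ultimately show ?thesis using that by simp
  qed
  then show ?thesis
    unfolding tight_def using P01_real_distribution[OF P]
    by (intro conjI allI impI exI[of _ "-1"] exI[of _ 1]) auto
qed

lemma weak_conv_m_integral_tendsto:
  fixes h :: "real \<Rightarrow> real"
  assumes "\<And>n. real_distribution (Ms n)" "real_distribution M" "weak_conv_m Ms M"
    and "continuous_on UNIV h" "\<And>x. \<bar>h x\<bar> \<le> B"
  shows "(\<lambda>n. \<integral>x. h x \<partial>Ms n) \<longlonglongrightarrow> (\<integral>x. h x \<partial>M)"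
  using assms by (intro weak_conv_imp_integral_bdd_continuous_conv[where B=B])
    (auto simp: continuous_on_eq_continuous_at)

text \<open>The bounded continuous function \<open>min 1 \<bar>x - clamp01 x\<bar>\<close> vanishes exactly on \<open>[0,1]\<close>.\<close>
lemma P01_weak_conv_m_limit:
  assumes P: "\<And>n. Ms n \<in> P01" and M: "real_distribution M" and conv: "weak_conv_m Ms M"
  shows "M \<in> P01"
proof -
  interpret M: real_distribution M by fact
  define d where "d x = min 1 \<bar>x - clamp01 x\<bar>" for x
  have dc: "continuous_on UNIV d"
    unfolding d_def using continuous_on_clamp01 by (intro continuous_intros)
  have d_bdd: "\<bar>d x\<bar> \<le> 1" and d_nonneg: "0 \<le> d x" for x by (simp_all add: d_def)
  have "(\<integral>x. d x \<partial>Ms n) = 0" for n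
    using integral_P01_cong[OF P, of d "\<lambda>_. 0"] dc
    by (simp add: d_def clamp01_id borel_measurable_continuous_onI)
  then have "(\<integral>x. d x \<partial>M) = 0"
    using weak_conv_m_integral_tendsto[OF P01_real_distribution[OF P] M conv dc d_bdd]
    by (simp add: LIMSEQ_const_iff)
  moreover have "integrable M d"
    using d_bdd borel_measurable_continuous_onI[OF dc]
    by (intro M.integrable_const_bound[where B=1]) auto
  ultimately have "AE x in M. d x = 0"
    using integral_nonneg_eq_0_iff_AE[of M d] d_nonneg by simp
  then have "AE x in M. x \<in> {0..1}"
    by eventually_elim (auto simp: d_def clamp01_def min_def max_def split: if_splits)
  then show "M \<in> P01" using M by (simp add: P01_iff)
qed

text \<open>Composing with \<^const>\<open>clamp01\<close> makes a continuous function bounded without changing its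
  integrals against measures in \<^const>\<open>P01\<close>.\<close>
lemma weak_conv_m_imp_weak_conv_cont:
  assumes P: "\<And>n. Ms n \<in> P01" and M: "M \<in> P01" and conv: "weak_conv_m Ms M"
  shows "weak_conv_cont Ms M"
  unfolding weak_conv_cont_def
proof (intro allI impI)
  fix g :: "real \<Rightarrow> real" assume g: "continuous_on UNIV g"
  have int_eq: "(\<integral>x. g (clamp01 x) \<partial>N) = (\<integral>x. g x \<partial>N)" if "N \<in> P01" for N
    using that g continuous_on_comp_clamp01[OF g]
    by (intro integral_P01_cong) (auto simp: clamp01_id intro: borel_measurable_continuous_onI)
  obtain B where B: "\<And>x. x \<in> {0..1} \<Longrightarrow> \<bar>g x\<bar> \<le> B"
    using bounded_on_unit_interval[OF g] by blast
  have "(\<lambda>n. \<integral>x. g (clamp01 x) \<partial>Ms n) \<longlonglongrightarrow> (\<integral>x. g (clamp01 x) \<partial>M)"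
    using P01_real_distribution[OF P] P01_real_distribution[OF M] conv
      continuous_on_comp_clamp01[OF g] B[OF clamp01_in_unit_interval]
    by (rule weak_conv_m_integral_tendsto)
  then show "(\<lambda>n. \<integral>x. g x \<partial>Ms n) \<longlonglongrightarrow> (\<integral>x. g x \<partial>M)"
    using int_eq P M by simp
qed

lemma P01_sequentially_compact:
  fixes Ms :: "nat \<Rightarrow> real measure"
  assumes "\<And>n. Ms n \<in> P01"
  obtains r M where "strict_mono r" "M \<in> P01" "weak_conv_cont (Ms \<circ> r) M"
proof -
  have "\<exists>r M. strict_mono r \<and> real_distribution M \<and> weak_conv_m (Ms \<circ> r) M"
    using tight_imp_convergent_subsubsequence[OF tight_P01[of Ms, OF assms] strict_mono_id] by simp
  then obtain r M where r: "strict_mono r" and M: "real_distribution M"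
    and conv: "weak_conv_m (Ms \<circ> r) M"
    by blast
  have P: "\<And>n. (Ms \<circ> r) n \<in> P01" using assms by simp
  have MP: "M \<in> P01" by (rule P01_weak_conv_m_limit[OF P M conv])
  show ?thesis by (rule that[OF r MP weak_conv_m_imp_weak_conv_cont[OF P MP conv]])
qed

section \<open>Semicontinuity of \<^const>\<open>EVaR\<close>\<close>

definition mgf :: "real measure \<Rightarrow> real \<Rightarrow> real" where
  "mgf \<kappa> z = (\<integral>x. exp (z * x) \<partial>\<kappa>)"

definition evar_bound :: "real \<Rightarrow> real measure \<Rightarrow> real \<Rightarrow> real" where
  "evar_bound \<alpha> \<kappa> z = (ln (mgf \<kappa> z) + rho \<alpha>) / z"

lemma EVaR_eq_Inf_evar_bound: "EVaR \<alpha> \<kappa> = Inf (evar_bound \<alpha> \<kappa> ` {0<..})"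
  unfolding EVaR_def evar_bound_def mgf_def ..

lemma rho_pos: "0 < \<alpha> \<Longrightarrow> \<alpha> < 1 \<Longrightarrow> 0 < rho \<alpha>"
  unfolding rho_def by simp

lemma integrable_exp_P01: "\<kappa> \<in> P01 \<Longrightarrow> integrable \<kappa> (\<lambda>x. exp (z * x))"
  by (intro integrable_P01_continuous continuous_intros)

lemma mgf_mono:
  assumes "\<kappa> \<in> P01" "0 \<le> z" "z \<le> z'"
  shows "mgf \<kappa> z \<le> mgf \<kappa> z'"
  unfolding mgf_def
proof (rule integral_mono_AE[OF integrable_exp_P01[OF assms(1)] integrable_exp_P01[OF assms(1)]])
  show "AE x in \<kappa>. exp (z * x) \<le> exp (z' * x)"
    using P01_AE_unit_interval[OF assms(1)]
    by eventually_elim (use assms(3) in \<open>auto intro: mult_right_mono\<close>)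
qed

lemma mgf_ge_1:
  assumes "\<kappa> \<in> P01" "0 \<le> z"
  shows "1 \<le> mgf \<kappa> z"
proof -
  interpret real_distribution \<kappa> using assms(1) by (rule P01_real_distribution)
  have "mgf \<kappa> 0 = 1" unfolding mgf_def using prob_space by simp
  then show ?thesis using mgf_mono[OF assms(1) order_refl assms(2)] by simp
qed

text \<open>Jensen's inequality for the convex function \<open>y \<mapsto> y powr (z / b)\<close>.\<close>
lemma mgf_powr_le:
  assumes "\<kappa> \<in> P01" "0 < b" "b \<le> z"
  shows "mgf \<kappa> b powr (z / b) \<le> mgf \<kappa> z"
proof -
  interpret real_distribution \<kappa> using assms(1) by (rule P01_real_distribution)
  have exp_powr: "exp (b * x) powr (z / b) = exp (z * x)" for x
    using assms(2) by (simp add: powr_def)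
  have "expectation (\<lambda>x. exp (b * x)) powr (z / b) \<le> expectation (\<lambda>x. exp (b * x) powr (z / b))"
  proof (rule jensens_inequality[where I="{0<..}" and a=0 and q="\<lambda>y. y powr (z / b)"])
    show "convex_on {0<..} (\<lambda>y. y powr (z / b))" using assms by (intro powr_convex) simp
  qed (simp_all add: exp_powr integrable_exp_P01[OF assms(1)])
  then show ?thesis unfolding exp_powr mgf_def .
qed

lemma ln_mgf_div_mono:
  assumes "\<kappa> \<in> P01" "0 < b" "b \<le> z"
  shows "ln (mgf \<kappa> b) / b \<le> ln (mgf \<kappa> z) / z"
proof -
  have pos: "0 < mgf \<kappa> b" "0 < mgf \<kappa> z"
    using mgf_ge_1[OF assms(1)] assms(2,3) by (auto intro: less_le_trans[OF zero_less_one])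
  have "ln (mgf \<kappa> b powr (z / b)) \<le> ln (mgf \<kappa> z)"
    using mgf_powr_le[OF assms] pos by (subst ln_le_cancel_iff) auto
  then have "ln (mgf \<kappa> b) * z \<le> ln (mgf \<kappa> z) * b"
    using pos assms(2) by (simp add: field_simps)
  then show ?thesis using assms(2,3) by (simp add: field_simps)
qed

lemma evar_bound_split: "evar_bound \<alpha> \<kappa> z = ln (mgf \<kappa> z) / z + rho \<alpha> / z"
  unfolding evar_bound_def by (simp add: add_divide_distrib)

lemma rho_div_le_evar_bound:
  assumes "\<kappa> \<in> P01" "0 < z"
  shows "rho \<alpha> / z \<le> evar_bound \<alpha> \<kappa> z"
  using mgf_ge_1[OF assms(1), of z] assms(2) unfolding evar_bound_split by simp

lemma ln_mgf_div_le_evar_bound: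
  assumes "0 < \<alpha>" "\<alpha> < 1" "0 < z"
  shows "ln (mgf \<kappa> z) / z \<le> evar_bound \<alpha> \<kappa> z"
  using rho_pos[OF assms(1,2)] assms(3) unfolding evar_bound_split by simp

lemma evar_bound_pos:
  assumes "\<kappa> \<in> P01" "0 < \<alpha>" "\<alpha> < 1" "0 < z"
  shows "0 < evar_bound \<alpha> \<kappa> z"
  using rho_div_le_evar_bound[OF assms(1,4), of \<alpha>] rho_pos[OF assms(2,3)] assms(4)
  by (meson divide_pos_pos less_le_trans)

lemma EVaR_le_evar_bound:
  assumes "\<kappa> \<in> P01" "0 < \<alpha>" "\<alpha> < 1" "0 < z"
  shows "EVaR \<alpha> \<kappa> \<le> evar_bound \<alpha> \<kappa> z"
  unfolding EVaR_eq_Inf_evar_bound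
proof (rule cInf_lower)
  show "bdd_below (evar_bound \<alpha> \<kappa> ` {0<..})"
    using evar_bound_pos[OF assms(1-3)] by (intro bdd_belowI[of _ 0]) (auto intro: less_imp_le)
qed (use assms(4) in simp)

lemma le_EVaR:
  "(\<And>z. 0 < z \<Longrightarrow> c \<le> evar_bound \<alpha> \<kappa> z) \<Longrightarrow> c \<le> EVaR \<alpha> \<kappa>"
  unfolding EVaR_eq_Inf_evar_bound by (rule cInf_greatest) auto

lemma EVaR_nonneg:
  assumes "\<kappa> \<in> P01" "0 < \<alpha>" "\<alpha> < 1"
  shows "0 \<le> EVaR \<alpha> \<kappa>"
  using evar_bound_pos[OF assms] by (intro le_EVaR) (simp add: less_imp_le)

lemma evar_bound_tendsto:
  assumes "weak_conv_cont \<kappa>s \<kappa>" "\<kappa> \<in> P01" "0 < z"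
  shows "(\<lambda>n. evar_bound \<alpha> (\<kappa>s n) z) \<longlonglongrightarrow> evar_bound \<alpha> \<kappa> z"
proof -
  have "(\<lambda>n. mgf (\<kappa>s n) z) \<longlonglongrightarrow> mgf \<kappa> z"
    unfolding mgf_def by (rule weak_conv_contD[OF assms(1)]) (intro continuous_intros)
  moreover have "0 < mgf \<kappa> z" using mgf_ge_1[OF assms(2), of z] assms(3) by simp
  ultimately show ?thesis
    unfolding evar_bound_def using assms(3) by (intro tendsto_intros) auto
qed

text \<open>Upper semicontinuity: \<^const>\<open>EVaR\<close> is an infimum of continuous functions of \<open>\<kappa>\<close>.\<close>
lemma le_EVaR_of_weak_conv:
  assumes "0 < \<alpha>" "\<alpha> < 1" "weak_conv_cont \<kappa>s \<kappa>" "\<kappa> \<in> P01" "\<And>n. \<kappa>s n \<in> P01"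
    and "\<And>n. \<nu>s n \<le> EVaR \<alpha> (\<kappa>s n)" "\<nu>s \<longlonglongrightarrow> \<nu>"
  shows "\<nu> \<le> EVaR \<alpha> \<kappa>"
proof (rule le_EVaR)
  fix z :: real assume z: "0 < z"
  have "\<nu>s n \<le> evar_bound \<alpha> (\<kappa>s n) z" for n
    using assms(6)[of n] EVaR_le_evar_bound[OF assms(5)[of n] assms(1,2) z] by linarith
  then show "\<nu> \<le> evar_bound \<alpha> \<kappa> z"
    using LIMSEQ_le[OF assms(7) evar_bound_tendsto[OF assms(3,4) z]] by blast
qed

lemma evar_bound_scaled_ge:
  assumes "\<kappa> \<in> P01" "0 < \<alpha>" "\<alpha> < 1" "0 < y" "y \<le> z" "z \<le> q * y"
  shows "evar_bound \<alpha> \<kappa> y / q \<le> evar_bound \<alpha> \<kappa> z"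
proof -
  have "0 < q * y" using assms(4-6) by linarith
  then have q: "0 < q" using assms(4) by (rule zero_less_mult_pos2)
  have "ln (mgf \<kappa> y) \<le> ln (mgf \<kappa> z)"
    using mgf_mono[OF assms(1) _ assms(5)] mgf_ge_1[OF assms(1), of y] assms(4) by simp
  moreover have "0 \<le> ln (mgf \<kappa> y) + rho \<alpha>"
    using mgf_ge_1[OF assms(1), of y] rho_pos[OF assms(2,3)] assms(4) by simp
  ultimately have "(ln (mgf \<kappa> y) + rho \<alpha>) / (q * y) \<le> (ln (mgf \<kappa> z) + rho \<alpha>) / z"
    using assms(4-6) q by (intro frac_le) auto
  then show ?thesis unfolding evar_bound_def by (simp add: mult.commute)
qed

lemma geometric_grid_bracket:
  fixes a q z :: real
  assumes "a < z" "z \<le> a * q ^ m"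
  shows "\<exists>j<m. a * q ^ j < z \<and> z \<le> a * q ^ Suc j"
  using assms(2)
proof (induction m)
  case 0
  then show ?case using assms(1) by simp
next
  case (Suc m)
  show ?case
  proof (cases "z \<le> a * q ^ m")
    case True
    then show ?thesis using Suc.IH less_SucI by blast
  next
    case False
    then show ?thesis using Suc.prems by auto
  qed
qed

text \<open>Below \<open>rho \<alpha> / t\<close> the term \<open>rho \<alpha> / z\<close> alone exceeds \<open>t\<close>, above \<open>b\<close> the monotone
  term \<open>ln (mgf \<kappa> z) / z\<close> does, and in between a geometric grid of ratio \<open>q\<close> loses at most a
  factor \<open>q\<close>.\<close>
lemma le_EVaR_of_grid:
  assumes \<kappa>: "\<kappa> \<in> P01" and \<alpha>: "0 < \<alpha>" "\<alpha> < 1" and t: "0 < t" and q: "1 < q"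
    and b: "0 < b" "t \<le> ln (mgf \<kappa> b) / b" "b \<le> rho \<alpha> / t * q ^ m"
    and grid: "\<And>i. i < m \<Longrightarrow> t \<le> evar_bound \<alpha> \<kappa> (rho \<alpha> / t * q ^ i)"
  shows "t / q \<le> EVaR \<alpha> \<kappa>"
proof (rule le_EVaR)
  fix z :: real assume z: "0 < z"
  define a where "a = rho \<alpha> / t"
  have a: "0 < a" unfolding a_def using rho_pos[OF \<alpha>] t by simp
  have tq: "t / q \<le> t" using t q by (simp add: divide_le_eq)
  consider "z \<le> a" | "b \<le> z" | "a < z" "z < b" by linarith
  then show "t / q \<le> evar_bound \<alpha> \<kappa> z"
  proof cases
    case 1
    have "t = rho \<alpha> / a" unfolding a_def using rho_pos[OF \<alpha>] t by simp
    also have "\<dots> \<le> rho \<alpha> / z" using 1 z rho_pos[OF \<alpha>] by (intro divide_left_mono) auto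
    also have "\<dots> \<le> evar_bound \<alpha> \<kappa> z" by (rule rho_div_le_evar_bound[OF \<kappa> z])
    finally show ?thesis using tq by linarith
  next
    case 2
    have "t \<le> ln (mgf \<kappa> z) / z" using b(2) ln_mgf_div_mono[OF \<kappa> b(1) 2] by linarith
    then show ?thesis using ln_mgf_div_le_evar_bound[OF \<alpha> z, of \<kappa>] tq by linarith
  next
    case 3
    then obtain j where j: "j < m" "a * q ^ j < z" "z \<le> a * q ^ Suc j"
      using geometric_grid_bracket[of a z q m] b(3) unfolding a_def by auto
    have "t / q \<le> evar_bound \<alpha> \<kappa> (a * q ^ j) / q"
      using grid[OF j(1)] q unfolding a_def by (simp add: divide_right_mono)
    also have "\<dots> \<le> evar_bound \<alpha> \<kappa> z"
      using j(2,3) a q by (intro evar_bound_scaled_ge[OF \<kappa> \<alpha>]) (auto simp: mult_ac)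
    finally show ?thesis .
  qed
qed

lemma less_ln_mgf_div_of_less_EVaR:
  assumes "\<kappa> \<in> P01" "0 < \<alpha>" "\<alpha> < 1" "t < EVaR \<alpha> \<kappa>"
  shows "\<exists>b>0. t < ln (mgf \<kappa> b) / b"
proof (rule ccontr)
  assume "\<not> ?thesis"
  then have le: "\<And>b. 0 < b \<Longrightarrow> ln (mgf \<kappa> b) / b \<le> t" by (meson not_less)
  define z where "z = 2 * rho \<alpha> / (EVaR \<alpha> \<kappa> - t)"
  have z: "0 < z" unfolding z_def using rho_pos[OF assms(2,3)] assms(4) by simp
  have "rho \<alpha> / z = (EVaR \<alpha> \<kappa> - t) / 2"
    unfolding z_def using rho_pos[OF assms(2,3)] assms(4) by (simp add: field_simps)
  then have "evar_bound \<alpha> \<kappa> z \<le> t + (EVaR \<alpha> \<kappa> - t) / 2"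
    using le[OF z] unfolding evar_bound_split by linarith
  moreover have "EVaR \<alpha> \<kappa> \<le> evar_bound \<alpha> \<kappa> z" by (rule EVaR_le_evar_bound[OF assms(1-3) z])
  ultimately show False using assms(4) by (simp add: field_simps)
qed

text \<open>Lower semicontinuity: by the previous lemma, convergence of \<^const>\<open>evar_bound\<close> at finitely
  many points already bounds the infimum from below.\<close>
lemma eventually_le_EVaR_of_weak_conv:
  assumes \<alpha>: "0 < \<alpha>" "\<alpha> < 1" and conv: "weak_conv_cont \<kappa>s \<kappa>" and \<kappa>: "\<kappa> \<in> P01"
    and \<kappa>s: "\<And>n. \<kappa>s n \<in> P01" and t: "0 < t" "t < EVaR \<alpha> \<kappa>"
  shows "eventually (\<lambda>n. t \<le> EVaR \<alpha> (\<kappa>s n)) sequentially"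
proof -
  define t1 where "t1 = (t + EVaR \<alpha> \<kappa>) / 2"
  have t1: "t < t1" "t1 < EVaR \<alpha> \<kappa>" "0 < t1" using t unfolding t1_def by simp_all
  define q where "q = t1 / t"
  have q: "1 < q" and t_eq: "t = t1 / q" unfolding q_def using t t1 by auto
  obtain b where b: "0 < b" "t1 < ln (mgf \<kappa> b) / b"
    using less_ln_mgf_div_of_less_EVaR[OF \<kappa> \<alpha> t1(2)] by blast
  obtain m where m: "b / (rho \<alpha> / t1) < q ^ m" using real_arch_pow[OF q] by blast
  have bm: "b \<le> rho \<alpha> / t1 * q ^ m"
    using m rho_pos[OF \<alpha>] t1 by (simp add: field_simps)
  have ev_b: "eventually (\<lambda>n. t1 < ln (mgf (\<kappa>s n) b) / b) sequentially"
  proof (rule order_tendstoD(1)[OF _ b(2)])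
    have "(\<lambda>n. mgf (\<kappa>s n) b) \<longlonglongrightarrow> mgf \<kappa> b"
      unfolding mgf_def by (rule weak_conv_contD[OF conv]) (intro continuous_intros)
    then show "(\<lambda>n. ln (mgf (\<kappa>s n) b) / b) \<longlonglongrightarrow> ln (mgf \<kappa> b) / b"
      using mgf_ge_1[OF \<kappa>, of b] b(1) by (intro tendsto_intros) auto
  qed
  have ev_grid: "eventually (\<lambda>n. \<forall>i\<in>{..<m}. t1 < evar_bound \<alpha> (\<kappa>s n) (rho \<alpha> / t1 * q ^ i)) sequentially"
  proof (intro eventually_ball_finite ballI)
    fix i
    have pos: "0 < rho \<alpha> / t1 * q ^ i" using rho_pos[OF \<alpha>] t1 q by simp
    have "t1 < evar_bound \<alpha> \<kappa> (rho \<alpha> / t1 * q ^ i)"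
      using EVaR_le_evar_bound[OF \<kappa> \<alpha> pos] t1 by linarith
    then show "eventually (\<lambda>n. t1 < evar_bound \<alpha> (\<kappa>s n) (rho \<alpha> / t1 * q ^ i)) sequentially"
      by (rule order_tendstoD(1)[OF evar_bound_tendsto[OF conv \<kappa> pos]])
  qed simp
  show ?thesis
    using ev_b ev_grid
  proof eventually_elim
    case (elim n)
    then show ?case
      unfolding t_eq using t1
      by (intro le_EVaR_of_grid[OF \<kappa>s \<alpha> _ q b(1) _ bm]) (auto intro: less_imp_le)
  qed
qed

lemma EVaR_le_of_weak_conv:
  assumes \<alpha>: "0 < \<alpha>" "\<alpha> < 1" and conv: "weak_conv_cont \<kappa>s \<kappa>" and \<kappa>: "\<kappa> \<in> P01"
    and \<kappa>s: "\<And>n. \<kappa>s n \<in> P01" and le: "\<And>n. EVaR \<alpha> (\<kappa>s n) \<le> \<nu>s n" and \<nu>: "\<nu>s \<longlonglongrightarrow> \<nu>"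
  shows "EVaR \<alpha> \<kappa> \<le> \<nu>"
proof (rule ccontr)
  assume "\<not> EVaR \<alpha> \<kappa> \<le> \<nu>"
  moreover have "0 \<le> \<nu>"
    using LIMSEQ_le_const[OF \<nu>] EVaR_nonneg[OF \<kappa>s \<alpha>] le by (meson order_trans)
  moreover define t where "t = (\<nu> + EVaR \<alpha> \<kappa>) / 2"
  ultimately have t: "\<nu> < t" "0 < t" "t < EVaR \<alpha> \<kappa>" by simp_all
  have "eventually (\<lambda>n. t \<le> \<nu>s n) sequentially"
    using eventually_le_EVaR_of_weak_conv[OF \<alpha> conv \<kappa> \<kappa>s t(2,3)]
    by (rule eventually_mono) (rule order_trans[OF _ le])
  then have "t \<le> \<nu>" by (rule tendsto_lowerbound[OF \<nu>]) simp
  then show False using t(1) by simp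
qed

section \<open>The Donsker-Varadhan variational formula\<close>

lemma (in real_distribution) integrable_exp_bounded:
  fixes g :: "real \<Rightarrow> real"
  assumes "g \<in> borel_measurable borel" "\<And>x. \<bar>g x\<bar> \<le> C"
  shows "integrable M (\<lambda>x. exp (g x))"
  using assms by (intro integrable_const_bound[where B="exp C"]) (auto simp: abs_le_iff)

lemma (in real_distribution) exp_neg_le_integral_exp:
  fixes g :: "real \<Rightarrow> real"
  assumes "g \<in> borel_measurable borel" "\<And>x. \<bar>g x\<bar> \<le> C"
  shows "exp (- C) \<le> (\<integral>x. exp (g x) \<partial>M)"
proof -
  have "- C \<le> g x" for x using assms(2)[of x] by linarith
  then have "(\<integral>x. exp (- C) \<partial>M) \<le> (\<integral>x. exp (g x) \<partial>M)"
    using integrable_exp_bounded[OF assms] by (intro integral_mono) auto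
  then show ?thesis using prob_space by simp
qed

definition donsker_varadhan :: "real measure \<Rightarrow> real measure \<Rightarrow> (real \<Rightarrow> real) \<Rightarrow> real" where
  "donsker_varadhan \<eta> \<kappa> f = (\<integral>x. f x \<partial>\<eta>) - ln (\<integral>x. exp (f x) \<partial>\<kappa>)"

definition rn_density :: "real measure \<Rightarrow> real measure \<Rightarrow> real \<Rightarrow> real" where
  "rn_density \<kappa> \<eta> x = enn2real (RN_deriv \<kappa> \<eta> x)"

definition KL_pos :: "real measure \<Rightarrow> real measure \<Rightarrow> ennreal" where
  "KL_pos \<eta> \<kappa> = (\<integral>\<^sup>+ x. ennreal (max 0 (ln (rn_density \<kappa> \<eta> x))) \<partial>\<eta>)"

definition KL_neg :: "real measure \<Rightarrow> real measure \<Rightarrow> ennreal" where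
  "KL_neg \<eta> \<kappa> = (\<integral>\<^sup>+ x. ennreal (max 0 (- ln (rn_density \<kappa> \<eta> x))) \<partial>\<eta>)"

lemma KL_abs_cont:
  "absolutely_continuous \<kappa> \<eta> \<Longrightarrow> KL \<eta> \<kappa> = enn2ereal (KL_pos \<eta> \<kappa>) - enn2ereal (KL_neg \<eta> \<kappa>)"
  unfolding KL_def KL_pos_def KL_neg_def rn_density_def by (simp add: Let_def)

lemma KL_not_abs_cont: "\<not> absolutely_continuous \<kappa> \<eta> \<Longrightarrow> KL \<eta> \<kappa> = \<infinity>"
  unfolding KL_def by simp

lemma mult_neg_ln_le_1: "0 \<le> (p::real) \<Longrightarrow> p * max 0 (- ln p) \<le> 1"
proof (cases "p = 0 \<or> 1 \<le> p")
  case False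
  assume "0 \<le> p"
  with False have p: "0 < p" "p < 1" by auto
  have "- ln p \<le> 1 / p - 1" using ln_le_minus_one[of "1 / p"] p by (simp add: ln_div)
  then have "p * (- ln p) \<le> p * (1 / p - 1)" using p by (intro mult_left_mono) auto
  also have "\<dots> = 1 - p" using p by (simp add: field_simps)
  finally show ?thesis using p by (simp add: max_def)
qed auto

locale real_distribution_pair = \<eta>: real_distribution \<eta> + \<kappa>: real_distribution \<kappa>
  for \<eta> \<kappa> :: "real measure"

text \<open>Without absolute continuity, a large multiple of the indicator of a \<open>\<kappa>\<close>-null set that
  \<open>\<eta>\<close> charges makes \<^const>\<open>donsker_varadhan\<close> arbitrarily large.\<close>
lemma (in real_distribution_pair) donsker_varadhan_unbounded_not_abs_cont:
  assumes "\<not> absolutely_continuous \<kappa> \<eta>"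
  obtains f C where "f \<in> borel_measurable borel" "\<And>x. \<bar>f x\<bar> \<le> C" "c < donsker_varadhan \<eta> \<kappa> f"
proof -
  obtain N where N: "N \<in> null_sets \<kappa>" "N \<notin> null_sets \<eta>"
    using assms unfolding absolutely_continuous_def by blast
  have N_sets: "N \<in> sets borel" using N(1) by (auto simp: null_sets_def)
  then have pos: "0 < measure \<eta> N"
    using N(2) by (simp add: null_sets_def \<eta>.emeasure_eq_measure zero_less_measure_iff)
  define C where "C = (\<bar>c\<bar> + 1) / measure \<eta> N"
  define f where "f x = C * indicator N x" for x
  have "AE x in \<kappa>. exp (f x) = 1"
    using AE_not_in[OF N(1)] by eventually_elim (simp add: f_def)
  then have "(\<integral>x. exp (f x) \<partial>\<kappa>) = (\<integral>x. 1 \<partial>\<kappa>)"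
    using N_sets by (intro integral_cong_AE) (auto simp: f_def)
  then have "donsker_varadhan \<eta> \<kappa> f = C * measure \<eta> N"
    using N_sets \<kappa>.prob_space by (simp add: donsker_varadhan_def f_def)
  also have "\<dots> = \<bar>c\<bar> + 1" unfolding C_def using pos by simp
  finally have "c < donsker_varadhan \<eta> \<kappa> f" by simp
  moreover have "\<bar>f x\<bar> \<le> C" for x unfolding f_def C_def using pos by (simp add: indicator_def)
  moreover have "f \<in> borel_measurable borel" unfolding f_def using N_sets by measurable
  ultimately show ?thesis using that by blast
qed

locale abs_cont_pair = real_distribution_pair +
  assumes abs_cont: "absolutely_continuous \<kappa> \<eta>"
begin

lemma rn_density_measurable[measurable]: "rn_density \<kappa> \<eta> \<in> borel_measurable borel"
proof -
  have "rn_density \<kappa> \<eta> \<in> borel_measurable \<kappa>" unfolding rn_density_def by measurable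
  then show ?thesis by simp
qed

lemma rn_density_nonneg: "0 \<le> rn_density \<kappa> \<eta> x"
  unfolding rn_density_def by simp

lemma integral_rn_density:
  assumes "h \<in> borel_measurable borel"
  shows "(\<integral>x. h x \<partial>\<eta>) = (\<integral>x. rn_density \<kappa> \<eta> x * h x \<partial>\<kappa>)"
    and "integrable \<eta> h \<longleftrightarrow> integrable \<kappa> (\<lambda>x. rn_density \<kappa> \<eta> x * h x)"
  using \<kappa>.RN_deriv_integral[OF \<eta>.sigma_finite_measure_axioms abs_cont _ \<kappa>.measurable_finite_borel[OF assms]]
    \<kappa>.RN_deriv_integrable[OF \<eta>.sigma_finite_measure_axioms abs_cont _ \<kappa>.measurable_finite_borel[OF assms]]
  unfolding rn_density_def by simp_all

lemma nn_integral_rn_density: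
  assumes "h \<in> borel_measurable borel"
  shows "(\<integral>\<^sup>+x. h x \<partial>\<eta>) = (\<integral>\<^sup>+x. ennreal (rn_density \<kappa> \<eta> x) * h x \<partial>\<kappa>)"
proof -
  have "(\<integral>\<^sup>+x. h x \<partial>\<eta>) = (\<integral>\<^sup>+x. RN_deriv \<kappa> \<eta> x * h x \<partial>\<kappa>)"
    using assms by (intro \<kappa>.RN_deriv_nn_integral[OF abs_cont]) simp_all
  also have "\<dots> = (\<integral>\<^sup>+x. ennreal (rn_density \<kappa> \<eta> x) * h x \<partial>\<kappa>)"
    using \<kappa>.RN_deriv_finite[OF \<eta>.sigma_finite_measure_axioms abs_cont]
    by (intro nn_integral_cong_AE) (auto simp: rn_density_def less_top)
  finally show ?thesis .
qed

lemma integral_rn_density_eq_1: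
  "integrable \<kappa> (rn_density \<kappa> \<eta>)" "(\<integral>x. rn_density \<kappa> \<eta> x \<partial>\<kappa>) = 1"
  using integral_rn_density[of "\<lambda>_. 1"] \<eta>.prob_space by simp_all

lemma AE_rn_density_pos: "AE x in \<eta>. 0 < rn_density \<kappa> \<eta> x"
proof -
  let ?Z = "{x. rn_density \<kappa> \<eta> x = 0}"
  have Z: "?Z \<in> sets borel" by measurable
  have "emeasure \<eta> ?Z = (\<integral>\<^sup>+x. ennreal (rn_density \<kappa> \<eta> x) * indicator ?Z x \<partial>\<kappa>)"
    using nn_integral_rn_density[of "indicator ?Z"] Z by simp
  also have "\<dots> = (\<integral>\<^sup>+x. 0 \<partial>\<kappa>)" by (intro nn_integral_cong) (simp split: split_indicator)
  finally have "AE x in \<eta>. x \<notin> ?Z" using Z by (intro AE_I'[of ?Z]) auto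
  then show ?thesis by eventually_elim (auto simp: less_le rn_density_nonneg)
qed

lemma KL_neg_le_1: "KL_neg \<eta> \<kappa> \<le> 1"
proof -
  have "KL_neg \<eta> \<kappa> =
      (\<integral>\<^sup>+x. ennreal (rn_density \<kappa> \<eta> x * max 0 (- ln (rn_density \<kappa> \<eta> x))) \<partial>\<kappa>)"
    unfolding KL_neg_def
    by (subst nn_integral_rn_density) (simp_all add: ennreal_mult rn_density_nonneg)
  also have "\<dots> \<le> (\<integral>\<^sup>+x. 1 \<partial>\<kappa>)"
    by (intro nn_integral_mono) (simp add: mult_neg_ln_le_1 rn_density_nonneg)
  finally show ?thesis using \<kappa>.emeasure_space_1 by simp
qed

lemma KL_neg_finite: obtains k where "KL_neg \<eta> \<kappa> = ennreal k" "0 \<le> k"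
  using KL_neg_le_1 by (cases "KL_neg \<eta> \<kappa>" rule: ennreal_cases) (auto simp: top_unique)

lemma KL_eq_integral_ln:
  assumes "KL_pos \<eta> \<kappa> \<noteq> \<infinity>"
  shows "integrable \<eta> (\<lambda>x. ln (rn_density \<kappa> \<eta> x))"
    and "KL \<eta> \<kappa> = ereal (\<integral>x. ln (rn_density \<kappa> \<eta> x) \<partial>\<eta>)"
proof -
  let ?l = "\<lambda>x. ln (rn_density \<kappa> \<eta> x)"
  have int_pos: "integrable \<eta> (\<lambda>x. max 0 (?l x))"
    using assms unfolding KL_pos_def by (intro integrableI_bounded) (simp_all add: less_top)
  have int_neg: "integrable \<eta> (\<lambda>x. max 0 (- ?l x))"
    using KL_neg_le_1 unfolding KL_neg_def
    by (intro integrableI_bounded) (simp_all add: le_less_trans[OF _ ennreal_less_top[of 1]])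
  have split: "(\<lambda>x. max 0 (?l x) - max 0 (- ?l x)) = ?l" by (auto simp: fun_eq_iff max_def)
  show "integrable \<eta> ?l"
    using Bochner_Integration.integrable_diff[OF int_pos int_neg] unfolding split .
  have "KL_pos \<eta> \<kappa> = ennreal (\<integral>x. max 0 (?l x) \<partial>\<eta>)"
    "KL_neg \<eta> \<kappa> = ennreal (\<integral>x. max 0 (- ?l x) \<partial>\<eta>)"
    unfolding KL_pos_def KL_neg_def
    by (rule nn_integral_eq_integral[OF int_pos], simp, rule nn_integral_eq_integral[OF int_neg], simp)
  then show "KL \<eta> \<kappa> = ereal (\<integral>x. ?l x \<partial>\<eta>)"
    using Bochner_Integration.integral_diff[OF int_pos int_neg]
    unfolding KL_abs_cont[OF abs_cont] split by simp
qed

text \<open>Gibbs' inequality, applied to \<open>u = exp f / (Z * rn_density \<kappa> \<eta>)\<close>, which has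
  \<open>\<integral> u d\<eta> \<le> 1\<close>, using \<open>ln u \<le> u - 1\<close>.\<close>
lemma donsker_varadhan_le_integral_ln:
  assumes f: "f \<in> borel_measurable borel" "\<And>x. \<bar>f x\<bar> \<le> C"
    and l: "integrable \<eta> (\<lambda>x. ln (rn_density \<kappa> \<eta> x))"
  shows "donsker_varadhan \<eta> \<kappa> f \<le> (\<integral>x. ln (rn_density \<kappa> \<eta> x) \<partial>\<eta>)"
proof -
  let ?p = "rn_density \<kappa> \<eta>"
  define Z where "Z = (\<integral>x. exp (f x) \<partial>\<kappa>)"
  have Z: "0 < Z"
    unfolding Z_def using \<kappa>.exp_neg_le_integral_exp[OF f] by (meson exp_gt_zero less_le_trans)
  define u where "u x = exp (f x) / (Z * ?p x)" for x
  have pu: "?p x * u x = (if ?p x = 0 then 0 else exp (f x) / Z)" for x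
    unfolding u_def by auto
  have int_exp: "integrable \<kappa> (\<lambda>x. exp (f x) / Z)"
    using \<kappa>.integrable_exp_bounded[OF f] by simp
  have int_pu: "integrable \<kappa> (\<lambda>x. ?p x * u x)"
  proof (rule Bochner_Integration.integrable_bound[OF int_exp])
    show "AE x in \<kappa>. norm (?p x * u x) \<le> norm (exp (f x) / Z)"
      using Z by (simp add: pu)
  qed (use f(1) in \<open>simp add: u_def\<close>)
  have u_meas: "u \<in> borel_measurable borel" unfolding u_def using f(1) by measurable
  have int_u: "integrable \<eta> u" using integral_rn_density(2)[OF u_meas] int_pu by simp
  have "(\<integral>x. u x \<partial>\<eta>) = (\<integral>x. ?p x * u x \<partial>\<kappa>)" by (rule integral_rn_density(1)[OF u_meas])
  also have "\<dots> \<le> (\<integral>x. exp (f x) / Z \<partial>\<kappa>)"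
    using Z by (intro integral_mono[OF int_pu int_exp]) (simp add: pu)
  also have "\<dots> = 1" using Z unfolding Z_def by simp
  finally have int_u_le: "(\<integral>x. u x \<partial>\<eta>) \<le> 1" .
  have "AE x in \<eta>. f x - ln Z - ln (?p x) \<le> u x - 1"
    using AE_rn_density_pos
  proof eventually_elim
    case (elim x)
    have "ln (u x) = f x - ln Z - ln (?p x)" unfolding u_def using elim Z by (simp add: ln_div ln_mult)
    moreover have "ln (u x) \<le> u x - 1" unfolding u_def using elim Z by (intro ln_le_minus_one) simp
    ultimately show ?case by simp
  qed
  moreover have int_f: "integrable \<eta> f"
    using f by (intro \<eta>.integrable_const_bound[where B=C]) simp_all
  ultimately have "(\<integral>x. f x - ln Z - ln (?p x) \<partial>\<eta>) \<le> (\<integral>x. u x - 1 \<partial>\<eta>)"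
    using int_u l by (intro integral_mono_AE) auto
  then show ?thesis
    using int_u_le int_f int_u l \<eta>.prob_space unfolding donsker_varadhan_def Z_def[symmetric] by simp
qed

lemma donsker_varadhan_le_KL:
  assumes "f \<in> borel_measurable borel" "\<And>x. \<bar>f x\<bar> \<le> C"
  shows "ereal (donsker_varadhan \<eta> \<kappa> f) \<le> KL \<eta> \<kappa>"
proof (cases "KL_pos \<eta> \<kappa> = \<infinity>")
  case True
  obtain k where "KL_neg \<eta> \<kappa> = ennreal k" "0 \<le> k" by (rule KL_neg_finite)
  then show ?thesis using True by (simp add: KL_abs_cont[OF abs_cont])
next
  case False
  show ?thesis
    using donsker_varadhan_le_integral_ln[OF assms KL_eq_integral_ln(1)[OF False]]
    unfolding KL_eq_integral_ln(2)[OF False] by simp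
qed

text \<open>Zeros of the density are sent to \<open>- N\<close> explicitly, since \<open>ln 0 = 0\<close> in HOL.\<close>
definition truncated_ln_density :: "nat \<Rightarrow> real \<Rightarrow> real" where
  "truncated_ln_density N x =
     (if rn_density \<kappa> \<eta> x = 0 then - real N else max (- real N) (min (real N) (ln (rn_density \<kappa> \<eta> x))))"

lemma truncated_ln_density_measurable[measurable]: "truncated_ln_density N \<in> borel_measurable borel"
  unfolding truncated_ln_density_def by measurable

lemma abs_truncated_ln_density_le: "\<bar>truncated_ln_density N x\<bar> \<le> real N"
  unfolding truncated_ln_density_def by auto

text \<open>\<open>exp (truncated_ln_density N) \<le> rn_density \<kappa> \<eta> + exp (- N)\<close>, so the normalising
  constant is at most \<open>1 + exp (- N)\<close>.\<close>
lemma ln_integral_exp_truncated_le: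
  "ln (\<integral>x. exp (truncated_ln_density N x) \<partial>\<kappa>) \<le> exp (- real N)"
proof -
  let ?f = "truncated_ln_density N"
  have int: "integrable \<kappa> (\<lambda>x. exp (?f x))"
    using abs_truncated_ln_density_le by (intro \<kappa>.integrable_exp_bounded) simp_all
  have "exp (?f x) \<le> rn_density \<kappa> \<eta> x + exp (- real N)" for x
  proof (cases "rn_density \<kappa> \<eta> x = 0")
    case False
    then have "0 < rn_density \<kappa> \<eta> x" using rn_density_nonneg[of x] by simp
    have "exp (?f x) \<le> exp (- real N) + exp (min (real N) (ln (rn_density \<kappa> \<eta> x)))"
      using False by (simp add: truncated_ln_density_def max_def)
    also have "exp (min (real N) (ln (rn_density \<kappa> \<eta> x))) \<le> exp (ln (rn_density \<kappa> \<eta> x))"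
      by simp
    also have "exp (ln (rn_density \<kappa> \<eta> x)) = rn_density \<kappa> \<eta> x"
      using \<open>0 < rn_density \<kappa> \<eta> x\<close> by simp
    finally show ?thesis by simp
  qed (simp add: truncated_ln_density_def)
  then have "(\<integral>x. exp (?f x) \<partial>\<kappa>) \<le> (\<integral>x. rn_density \<kappa> \<eta> x + exp (- real N) \<partial>\<kappa>)"
    using int integral_rn_density_eq_1(1) by (intro integral_mono) auto
  also have "\<dots> = 1 + exp (- real N)"
    using integral_rn_density_eq_1 \<kappa>.prob_space by simp
  finally have "ln (\<integral>x. exp (?f x) \<partial>\<kappa>) \<le> ln (1 + exp (- real N))"
    using \<kappa>.exp_neg_le_integral_exp[of ?f "real N"] abs_truncated_ln_density_le
    by (subst ln_le_cancel_iff) (auto intro: less_le_trans[OF exp_gt_zero] add_pos_pos)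
  also have "\<dots> \<le> exp (- real N)" by (rule ln_add_one_self_le_self) simp
  finally show ?thesis .
qed

lemma integral_truncated_ln_density:
  "(\<integral>x. truncated_ln_density N x \<partial>\<eta>) =
     (\<integral>x. min (real N) (max 0 (ln (rn_density \<kappa> \<eta> x))) \<partial>\<eta>)
     - (\<integral>x. min (real N) (max 0 (- ln (rn_density \<kappa> \<eta> x))) \<partial>\<eta>)"
proof -
  let ?l = "\<lambda>x. ln (rn_density \<kappa> \<eta> x)"
  have split: "max (- n) (min n y) = min n (max 0 y) - min n (max 0 (- y))" if "0 \<le> n" for n y :: real
    using that by (auto simp: min_def max_def)
  have "AE x in \<eta>. truncated_ln_density N x = min (real N) (max 0 (?l x)) - min (real N) (max 0 (- ?l x))"
    using AE_rn_density_pos by eventually_elim (simp add: truncated_ln_density_def split)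
  then have "(\<integral>x. truncated_ln_density N x \<partial>\<eta>) =
      (\<integral>x. min (real N) (max 0 (?l x)) - min (real N) (max 0 (- ?l x)) \<partial>\<eta>)"
    by (intro integral_cong_AE) simp_all
  also have "\<dots> = (\<integral>x. min (real N) (max 0 (?l x)) \<partial>\<eta>) - (\<integral>x. min (real N) (max 0 (- ?l x)) \<partial>\<eta>)"
    by (intro Bochner_Integration.integral_diff \<eta>.integrable_const_bound[where B="real N"]) simp_all
  finally show ?thesis .
qed

lemma integral_min_max_ln_le_KL_neg:
  "ennreal (\<integral>x. min (real N) (max 0 (- ln (rn_density \<kappa> \<eta> x))) \<partial>\<eta>) \<le> KL_neg \<eta> \<kappa>"
proof -
  have "integrable \<eta> (\<lambda>x. min (real N) (max 0 (- ln (rn_density \<kappa> \<eta> x))))"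
    by (rule \<eta>.integrable_const_bound[where B="real N"]) auto
  then have "ennreal (\<integral>x. min (real N) (max 0 (- ln (rn_density \<kappa> \<eta> x))) \<partial>\<eta>) =
      (\<integral>\<^sup>+x. ennreal (min (real N) (max 0 (- ln (rn_density \<kappa> \<eta> x)))) \<partial>\<eta>)"
    by (rule nn_integral_eq_integral[symmetric]) simp
  also have "\<dots> \<le> KL_neg \<eta> \<kappa>"
    unfolding KL_neg_def by (intro nn_integral_mono ennreal_leI) (simp add: min_le_iff_disj)
  finally show ?thesis .
qed

lemma integral_min_max_ln_tendsto_KL_pos:
  "(\<lambda>N. ennreal (\<integral>x. min (real N) (max 0 (ln (rn_density \<kappa> \<eta> x))) \<partial>\<eta>)) \<longlonglongrightarrow> KL_pos \<eta> \<kappa>"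
proof -
  let ?g = "\<lambda>N x. ennreal (min (real N) (max 0 (ln (rn_density \<kappa> \<eta> x))))"
  have "(\<lambda>N. \<integral>\<^sup>+x. ?g N x \<partial>\<eta>) \<longlonglongrightarrow> KL_pos \<eta> \<kappa>"
    unfolding KL_pos_def
  proof (rule nn_integral_LIMSEQ)
    show "incseq ?g" by (auto simp: incseq_def le_fun_def intro!: ennreal_leI)
    fix x
    obtain N0 :: nat where "max 0 (ln (rn_density \<kappa> \<eta> x)) \<le> real N0" using real_arch_simple by blast
    then have "eventually (\<lambda>N. ?g N x = ennreal (max 0 (ln (rn_density \<kappa> \<eta> x)))) sequentially"
      unfolding eventually_sequentially by (auto intro!: exI[of _ N0] simp: min_absorb2)
    then show "(\<lambda>N. ?g N x) \<longlonglongrightarrow> ennreal (max 0 (ln (rn_density \<kappa> \<eta> x)))"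
      by (rule tendsto_eventually)
  qed simp
  moreover have "(\<integral>\<^sup>+x. ?g N x \<partial>\<eta>) = ennreal (\<integral>x. min (real N) (max 0 (ln (rn_density \<kappa> \<eta> x))) \<partial>\<eta>)"
    for N
  proof (rule nn_integral_eq_integral)
    show "integrable \<eta> (\<lambda>x. min (real N) (max 0 (ln (rn_density \<kappa> \<eta> x))))"
      by (rule \<eta>.integrable_const_bound[where B="real N"]) auto
  qed simp
  ultimately show ?thesis by simp
qed

lemma less_donsker_varadhan_truncated:
  assumes "ereal c < KL \<eta> \<kappa>"
  obtains N where "c < donsker_varadhan \<eta> \<kappa> (truncated_ln_density N)"
proof -
  let ?A = "\<lambda>N. \<integral>x. min (real N) (max 0 (ln (rn_density \<kappa> \<eta> x))) \<partial>\<eta>"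
  let ?B = "\<lambda>N. \<integral>x. min (real N) (max 0 (- ln (rn_density \<kappa> \<eta> x))) \<partial>\<eta>"
  obtain k where k: "KL_neg \<eta> \<kappa> = ennreal k" "0 \<le> k" by (rule KL_neg_finite)
  have "ereal (c + k) < enn2ereal (KL_pos \<eta> \<kappa>)"
    using assms k unfolding KL_abs_cont[OF abs_cont]
    by (cases "enn2ereal (KL_pos \<eta> \<kappa>)") auto
  then obtain T where "ereal (c + k) < ereal T" and T2: "ereal T < enn2ereal (KL_pos \<eta> \<kappa>)"
    using ereal_dense2 by blast
  then have T1: "0 < T - (c + k)" by simp
  have "(\<lambda>N. enn2ereal (ennreal (?A N))) \<longlonglongrightarrow> enn2ereal (KL_pos \<eta> \<kappa>)"
    using integral_min_max_ln_tendsto_KL_pos by (simp only: tendsto_enn2ereal_iff)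
  moreover have "enn2ereal (ennreal (?A N)) = ereal (?A N)" for N
    by (intro enn2ereal_ennreal Bochner_Integration.integral_nonneg) simp
  ultimately have "(\<lambda>N. ereal (?A N)) \<longlonglongrightarrow> enn2ereal (KL_pos \<eta> \<kappa>)" by simp
  from order_tendstoD(1)[OF this T2]
  have ev_A: "eventually (\<lambda>N. T < ?A N) sequentially" by simp
  have "(\<lambda>N. exp (- real N)) \<longlonglongrightarrow> 0"
    by (rule filterlim_compose[OF exp_at_bot])
       (simp add: filterlim_uminus_at_bot filterlim_real_sequentially)
  then have ev_exp: "eventually (\<lambda>N. exp (- real N) < T - (c + k)) sequentially"
    using order_tendstoD(2)[OF _ T1] by blast
  obtain N where N: "T < ?A N" "exp (- real N) < T - (c + k)"
    using eventually_conj[OF ev_A ev_exp] by (auto simp: eventually_sequentially)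
  have "?B N \<le> k"
    using integral_min_max_ln_le_KL_neg[of N] k by simp
  then have "c < donsker_varadhan \<eta> \<kappa> (truncated_ln_density N)"
    using N ln_integral_exp_truncated_le[of N]
    unfolding donsker_varadhan_def integral_truncated_ln_density by linarith
  then show ?thesis by (rule that)
qed

end

lemma (in real_distribution_pair) donsker_varadhan_le_KL:
  assumes "f \<in> borel_measurable borel" "\<And>x. \<bar>f x\<bar> \<le> C"
  shows "ereal (donsker_varadhan \<eta> \<kappa> f) \<le> KL \<eta> \<kappa>"
proof (cases "absolutely_continuous \<kappa> \<eta>")
  case True
  interpret abs_cont_pair \<eta> \<kappa> by unfold_locales fact
  show ?thesis using donsker_varadhan_le_KL[OF assms] .
qed (simp add: KL_not_abs_cont)

lemma (in real_distribution_pair) less_donsker_varadhan_of_less_KL: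
  assumes "ereal c < KL \<eta> \<kappa>"
  obtains f C where "f \<in> borel_measurable borel" "\<And>x. \<bar>f x\<bar> \<le> C" "c < donsker_varadhan \<eta> \<kappa> f"
proof (cases "absolutely_continuous \<kappa> \<eta>")
  case True
  interpret abs_cont_pair \<eta> \<kappa> by unfold_locales fact
  obtain N where "c < donsker_varadhan \<eta> \<kappa> (truncated_ln_density N)"
    using less_donsker_varadhan_truncated[OF assms] .
  then show ?thesis
    using that truncated_ln_density_measurable abs_truncated_ln_density_le by blast
next
  case False
  then show ?thesis using donsker_varadhan_unbounded_not_abs_cont that by blast
qed

section \<open>Approximation by continuous functions\<close>

lemma (in real_distribution) compact_open_approx:
  assumes "A \<in> sets borel" "0 < \<delta>"
  obtains K U where "compact K" "open U" "K \<subseteq> A" "A \<subseteq> U" "measure M (U - K) < \<delta>"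
proof -
  have d2: "0 < \<delta> / 2" using assms(2) by simp
  obtain K where K: "K \<subseteq> A" "compact K" "emeasure M A < emeasure M K + ennreal (\<delta> / 2)"
    using SUP_approx_ennreal[OF d2 _ inner_regular[OF events_eq_borel _ assms(1)]] by fastforce
  obtain U where U: "A \<subseteq> U" "open U" "emeasure M U < emeasure M A + ennreal (\<delta> / 2)"
    using INF_approx_ennreal[OF d2 outer_regular[OF events_eq_borel _ assms(1)]] by fastforce
  have "measure M A < measure M K + \<delta> / 2" "measure M U < measure M A + \<delta> / 2"
    using K(3) U(3) d2
    by (simp_all add: emeasure_eq_measure ennreal_plus[symmetric] ennreal_less_iff del: ennreal_plus)
  moreover have "measure M (U - K) = measure M U - measure M K"
    using K(1,2) U(1,2) by (intro finite_measure_Diff) (auto simp: compact_imp_closed)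
  ultimately show ?thesis using that K U by simp
qed

lemma nn_integral_abs_diff_add_le:
  fixes f1 f2 g1 g2 :: "'a \<Rightarrow> real"
  assumes [measurable]: "f1 \<in> borel_measurable M" "f2 \<in> borel_measurable M"
    "g1 \<in> borel_measurable M" "g2 \<in> borel_measurable M"
  shows "(\<integral>\<^sup>+x. ennreal \<bar>(g1 x + g2 x) - (f1 x + f2 x)\<bar> \<partial>M)
    \<le> (\<integral>\<^sup>+x. ennreal \<bar>g1 x - f1 x\<bar> \<partial>M) + (\<integral>\<^sup>+x. ennreal \<bar>g2 x - f2 x\<bar> \<partial>M)"
proof -
  have "(\<integral>\<^sup>+x. ennreal \<bar>(g1 x + g2 x) - (f1 x + f2 x)\<bar> \<partial>M)
      \<le> (\<integral>\<^sup>+x. ennreal \<bar>g1 x - f1 x\<bar> + ennreal \<bar>g2 x - f2 x\<bar> \<partial>M)"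
    by (intro nn_integral_mono) (simp add: ennreal_plus[symmetric] ennreal_leI del: ennreal_plus)
  also have "\<dots> = (\<integral>\<^sup>+x. ennreal \<bar>g1 x - f1 x\<bar> \<partial>M) + (\<integral>\<^sup>+x. ennreal \<bar>g2 x - f2 x\<bar> \<partial>M)"
    by (rule nn_integral_add) simp_all
  finally show ?thesis .
qed

definition cont_L1_approx :: "real measure \<Rightarrow> real measure \<Rightarrow> (real \<Rightarrow> real) \<Rightarrow> bool" where
  "cont_L1_approx \<eta> \<kappa> f \<longleftrightarrow> (\<forall>\<epsilon>>0. \<exists>g. continuous_on UNIV g \<and>
      (\<integral>\<^sup>+x. ennreal \<bar>g x - f x\<bar> \<partial>\<eta>) \<le> ennreal \<epsilon> \<and> (\<integral>\<^sup>+x. ennreal \<bar>g x - f x\<bar> \<partial>\<kappa>) \<le> ennreal \<epsilon>)"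

lemma abs_floor_step_diff_le:
  fixes f :: "'a \<Rightarrow> real"
  assumes \<delta>: "0 < \<delta>" and bnd: "\<bar>f x\<bar> \<le> C"
  shows "\<bar>(\<Sum>k\<in>{- (\<lceil>C / \<delta>\<rceil> + 1)..\<lceil>C / \<delta>\<rceil> + 1}. \<delta> * real_of_int k * indicator {y. \<lfloor>f y / \<delta>\<rfloor> = k} x)
    - f x\<bar> \<le> \<delta>"
proof -
  define K where "K = \<lceil>C / \<delta>\<rceil> + 1"
  define m where "m = \<lfloor>f x / \<delta>\<rfloor>"
  have fl: "real_of_int m \<le> f x / \<delta>" "f x / \<delta> < real_of_int m + 1"
    unfolding m_def by linarith+
  have "- C \<le> f x" "f x \<le> C" using bnd by (auto simp: abs_le_iff)
  then have "- (C / \<delta>) \<le> f x / \<delta>" "f x / \<delta> \<le> C / \<delta>"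
    using \<delta> by (simp_all add: field_simps)
  moreover have "C / \<delta> \<le> real_of_int \<lceil>C / \<delta>\<rceil>" by linarith
  ultimately have "real_of_int m < real_of_int K" "real_of_int (- K) < real_of_int m"
    using fl unfolding K_def of_int_add of_int_minus of_int_1 by linarith+
  then have m: "m \<in> {-K..K}" by simp
  have "(\<Sum>k\<in>{-K..K}. \<delta> * real_of_int k * indicator {y. \<lfloor>f y / \<delta>\<rfloor> = k} x)
      = (\<Sum>k\<in>{-K..K}. if k = m then \<delta> * real_of_int k else 0)"
    unfolding m_def by (intro sum.cong) (auto simp: indicator_def)
  also have "\<dots> = \<delta> * real_of_int m" using m by simp
  finally show ?thesis
    using fl \<delta> unfolding K_def by (simp add: field_simps)
qed

context real_distribution_pair
begin

text \<open>Urysohn's lemma for a compact \<open>K \<subseteq> A\<close> and an open \<open>U \<supseteq> A\<close> that are close to \<open>A\<close>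
  for both measures.\<close>
lemma cont_L1_approx_indicator:
  assumes A: "A \<in> sets borel"
  shows "cont_L1_approx \<eta> \<kappa> (indicator A)"
  unfolding cont_L1_approx_def
proof (intro allI impI)
  fix \<epsilon> :: real assume \<epsilon>: "0 < \<epsilon>"
  obtain K1 U1 where KU1: "compact K1" "open U1" "K1 \<subseteq> A" "A \<subseteq> U1" "measure \<eta> (U1 - K1) < \<epsilon>"
    using \<eta>.compact_open_approx[OF A \<epsilon>] .
  obtain K2 U2 where KU2: "compact K2" "open U2" "K2 \<subseteq> A" "A \<subseteq> U2" "measure \<kappa> (U2 - K2) < \<epsilon>"
    using \<kappa>.compact_open_approx[OF A \<epsilon>] .
  define K where "K = K1 \<union> K2"
  define U where "U = U1 \<inter> U2"
  have KU: "closed K" "open U" "K \<subseteq> U"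
    using KU1 KU2 unfolding K_def U_def by (auto simp: compact_imp_closed)
  obtain g :: "real \<Rightarrow> real" where g: "continuous_on UNIV g" "\<And>x. g x \<in> closed_segment 0 1"
    "\<And>x. x \<in> - U \<Longrightarrow> g x = 0" "\<And>x. x \<in> K \<Longrightarrow> g x = 1"
    using Urysohn[of "- U" K 0 1] KU by auto
  have close: "\<bar>g x - indicator A x\<bar> \<le> indicator (U - K) x" for x
    using g(2-4)[of x] KU1 KU2 unfolding K_def U_def
    by (auto simp: indicator_def closed_segment_eq_real_ivl1)
  then have bound: "(\<integral>\<^sup>+x. ennreal \<bar>g x - indicator A x\<bar> \<partial>M) \<le> ennreal \<epsilon>"
    if "real_distribution M" "U - K \<subseteq> U' - K'" "U' - K' \<in> sets borel" "measure M (U' - K') < \<epsilon>"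
    for M U' K'
  proof -
    interpret real_distribution M by fact
    have "(\<integral>\<^sup>+x. ennreal \<bar>g x - indicator A x\<bar> \<partial>M) \<le> (\<integral>\<^sup>+x. indicator (U - K) x \<partial>M)"
      by (intro nn_integral_mono) (subst ennreal_indicator[symmetric], rule ennreal_leI[OF close])
    also have "\<dots> \<le> emeasure M (U' - K')"
      using that KU by (simp add: emeasure_mono)
    also have "\<dots> \<le> ennreal \<epsilon>" using that(4) by (simp add: emeasure_eq_measure ennreal_leI)
    finally show ?thesis .
  qed
  have "U - K \<subseteq> U1 - K1" "U - K \<subseteq> U2 - K2" unfolding U_def K_def by auto
  moreover have "U1 - K1 \<in> sets borel" "U2 - K2 \<in> sets borel"
    using KU1 KU2 by (auto simp: compact_imp_closed)
  ultimately show "\<exists>g. continuous_on UNIV g \<and> (\<integral>\<^sup>+x. ennreal \<bar>g x - indicator A x\<bar> \<partial>\<eta>) \<le> ennreal \<epsilon> \<and>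
      (\<integral>\<^sup>+x. ennreal \<bar>g x - indicator A x\<bar> \<partial>\<kappa>) \<le> ennreal \<epsilon>"
    using bound[OF \<eta>.real_distribution_axioms _ _ KU1(5)] bound[OF \<kappa>.real_distribution_axioms _ _ KU2(5)] g(1)
    by blast
qed

lemma cont_L1_approx_add:
  assumes "f1 \<in> borel_measurable borel" "f2 \<in> borel_measurable borel"
    and "cont_L1_approx \<eta> \<kappa> f1" "cont_L1_approx \<eta> \<kappa> f2"
  shows "cont_L1_approx \<eta> \<kappa> (\<lambda>x. f1 x + f2 x)"
  unfolding cont_L1_approx_def
proof (intro allI impI)
  fix \<epsilon> :: real assume "0 < \<epsilon>"
  then have \<epsilon>2: "0 < \<epsilon> / 2" "ennreal (\<epsilon> / 2) + ennreal (\<epsilon> / 2) = ennreal \<epsilon>"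
    by (simp_all add: ennreal_plus[symmetric] del: ennreal_plus)
  obtain g1 where g1: "continuous_on UNIV g1" "(\<integral>\<^sup>+x. ennreal \<bar>g1 x - f1 x\<bar> \<partial>\<eta>) \<le> ennreal (\<epsilon>/2)"
      "(\<integral>\<^sup>+x. ennreal \<bar>g1 x - f1 x\<bar> \<partial>\<kappa>) \<le> ennreal (\<epsilon>/2)"
    using assms(3) \<epsilon>2(1) unfolding cont_L1_approx_def by blast
  obtain g2 where g2: "continuous_on UNIV g2" "(\<integral>\<^sup>+x. ennreal \<bar>g2 x - f2 x\<bar> \<partial>\<eta>) \<le> ennreal (\<epsilon>/2)"
      "(\<integral>\<^sup>+x. ennreal \<bar>g2 x - f2 x\<bar> \<partial>\<kappa>) \<le> ennreal (\<epsilon>/2)"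
    using assms(4) \<epsilon>2(1) unfolding cont_L1_approx_def by blast
  have gm: "g1 \<in> borel_measurable borel" "g2 \<in> borel_measurable borel"
    using g1(1) g2(1) by (auto intro: borel_measurable_continuous_onI)
  have "(\<integral>\<^sup>+x. ennreal \<bar>(g1 x + g2 x) - (f1 x + f2 x)\<bar> \<partial>M) \<le> ennreal \<epsilon>"
    if "real_distribution M" "(\<integral>\<^sup>+x. ennreal \<bar>g1 x - f1 x\<bar> \<partial>M) \<le> ennreal (\<epsilon>/2)"
      "(\<integral>\<^sup>+x. ennreal \<bar>g2 x - f2 x\<bar> \<partial>M) \<le> ennreal (\<epsilon>/2)" for M
  proof -
    interpret real_distribution M by fact
    have "(\<integral>\<^sup>+x. ennreal \<bar>(g1 x + g2 x) - (f1 x + f2 x)\<bar> \<partial>M)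
        \<le> (\<integral>\<^sup>+x. ennreal \<bar>g1 x - f1 x\<bar> \<partial>M) + (\<integral>\<^sup>+x. ennreal \<bar>g2 x - f2 x\<bar> \<partial>M)"
      using assms(1,2) gm by (intro nn_integral_abs_diff_add_le) simp_all
    also have "\<dots> \<le> ennreal (\<epsilon>/2) + ennreal (\<epsilon>/2)" using that(2,3) by (rule add_mono)
    finally show ?thesis unfolding \<epsilon>2(2) .
  qed
  moreover have "continuous_on UNIV (\<lambda>x. g1 x + g2 x)" using g1(1) g2(1) by (intro continuous_intros)
  ultimately show "\<exists>g. continuous_on UNIV g \<and>
      (\<integral>\<^sup>+x. ennreal \<bar>g x - (f1 x + f2 x)\<bar> \<partial>\<eta>) \<le> ennreal \<epsilon> \<and>
      (\<integral>\<^sup>+x. ennreal \<bar>g x - (f1 x + f2 x)\<bar> \<partial>\<kappa>) \<le> ennreal \<epsilon>"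
    using g1 g2 \<eta>.real_distribution_axioms \<kappa>.real_distribution_axioms by blast
qed

lemma cont_L1_approx_cmult:
  assumes "f \<in> borel_measurable borel" "cont_L1_approx \<eta> \<kappa> f"
  shows "cont_L1_approx \<eta> \<kappa> (\<lambda>x. c * f x)"
  unfolding cont_L1_approx_def
proof (intro allI impI)
  fix \<epsilon> :: real assume \<epsilon>: "0 < \<epsilon>"
  define c' where "c' = \<bar>c\<bar> + 1"
  have c': "0 < c'" "\<bar>c\<bar> \<le> c'" unfolding c'_def by auto
  obtain g where g: "continuous_on UNIV g" "(\<integral>\<^sup>+x. ennreal \<bar>g x - f x\<bar> \<partial>\<eta>) \<le> ennreal (\<epsilon> / c')"
      "(\<integral>\<^sup>+x. ennreal \<bar>g x - f x\<bar> \<partial>\<kappa>) \<le> ennreal (\<epsilon> / c')"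
    using assms(2) \<epsilon> c' unfolding cont_L1_approx_def by (meson divide_pos_pos)
  have gm: "g \<in> borel_measurable borel" using g(1) by (rule borel_measurable_continuous_onI)
  have "(\<integral>\<^sup>+x. ennreal \<bar>c * g x - c * f x\<bar> \<partial>M) \<le> ennreal \<epsilon>"
    if "real_distribution M" "(\<integral>\<^sup>+x. ennreal \<bar>g x - f x\<bar> \<partial>M) \<le> ennreal (\<epsilon> / c')" for M
  proof -
    interpret real_distribution M by fact
    have "(\<integral>\<^sup>+x. ennreal \<bar>c * g x - c * f x\<bar> \<partial>M) \<le> (\<integral>\<^sup>+x. ennreal c' * ennreal \<bar>g x - f x\<bar> \<partial>M)"
      using c' by (intro nn_integral_mono)
        (simp add: ennreal_mult[symmetric] abs_mult right_diff_distrib[symmetric] mult_right_mono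
          ennreal_leI del: ennreal_mult)
    also have "\<dots> = ennreal c' * (\<integral>\<^sup>+x. ennreal \<bar>g x - f x\<bar> \<partial>M)"
      using assms(1) gm by (intro nn_integral_cmult) simp
    also have "\<dots> \<le> ennreal c' * ennreal (\<epsilon> / c')" using that(2) by (rule mult_left_mono) simp
    also have "\<dots> = ennreal \<epsilon>" using c' \<epsilon> by (simp add: ennreal_mult[symmetric] del: ennreal_mult)
    finally show ?thesis .
  qed
  moreover have "continuous_on UNIV (\<lambda>x. c * g x)" using g(1) by (intro continuous_intros)
  ultimately show "\<exists>g. continuous_on UNIV g \<and> (\<integral>\<^sup>+x. ennreal \<bar>g x - c * f x\<bar> \<partial>\<eta>) \<le> ennreal \<epsilon> \<and>
      (\<integral>\<^sup>+x. ennreal \<bar>g x - c * f x\<bar> \<partial>\<kappa>) \<le> ennreal \<epsilon>"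
    using g \<eta>.real_distribution_axioms \<kappa>.real_distribution_axioms by blast
qed

lemma cont_L1_approx_sum:
  assumes "finite I" "\<And>i. i \<in> I \<Longrightarrow> f i \<in> borel_measurable borel"
    "\<And>i. i \<in> I \<Longrightarrow> cont_L1_approx \<eta> \<kappa> (f i)"
  shows "cont_L1_approx \<eta> \<kappa> (\<lambda>x. \<Sum>i\<in>I. f i x)"
  using assms
proof (induction I rule: finite_induct)
  case empty
  then show ?case unfolding cont_L1_approx_def by (intro allI impI exI[of _ "\<lambda>x. 0"]) auto
next
  case (insert i I)
  then show ?case by (simp add: cont_L1_approx_add)
qed

lemma cont_L1_approx_uniform_limit:
  assumes f: "f \<in> borel_measurable borel"
    and approx: "\<And>\<delta>. 0 < \<delta> \<Longrightarrow>
      \<exists>s. s \<in> borel_measurable borel \<and> cont_L1_approx \<eta> \<kappa> s \<and> (\<forall>x. \<bar>s x - f x\<bar> \<le> \<delta>)"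
  shows "cont_L1_approx \<eta> \<kappa> f"
  unfolding cont_L1_approx_def
proof (intro allI impI)
  fix \<epsilon> :: real assume "0 < \<epsilon>"
  then have \<epsilon>2: "0 < \<epsilon> / 2" "ennreal (\<epsilon> / 2) + ennreal (\<epsilon> / 2) = ennreal \<epsilon>"
    by (simp_all add: ennreal_plus[symmetric] del: ennreal_plus)
  obtain s where s: "s \<in> borel_measurable borel" "cont_L1_approx \<eta> \<kappa> s" "\<And>x. \<bar>s x - f x\<bar> \<le> \<epsilon> / 2"
    using approx[OF \<epsilon>2(1)] by blast
  obtain g where g: "continuous_on UNIV g" "(\<integral>\<^sup>+x. ennreal \<bar>g x - s x\<bar> \<partial>\<eta>) \<le> ennreal (\<epsilon>/2)"
      "(\<integral>\<^sup>+x. ennreal \<bar>g x - s x\<bar> \<partial>\<kappa>) \<le> ennreal (\<epsilon>/2)"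
    using s(2) \<epsilon>2(1) unfolding cont_L1_approx_def by blast
  have gm: "g \<in> borel_measurable borel" using g(1) by (rule borel_measurable_continuous_onI)
  have "(\<integral>\<^sup>+x. ennreal \<bar>g x - f x\<bar> \<partial>M) \<le> ennreal \<epsilon>"
    if "real_distribution M" "(\<integral>\<^sup>+x. ennreal \<bar>g x - s x\<bar> \<partial>M) \<le> ennreal (\<epsilon>/2)" for M
  proof -
    interpret real_distribution M by fact
    have "ennreal \<bar>g x - f x\<bar> \<le> ennreal \<bar>g x - s x\<bar> + ennreal (\<epsilon> / 2)" for x
    proof -
      have "\<bar>g x - f x\<bar> \<le> \<bar>g x - s x\<bar> + \<epsilon> / 2"
        using abs_triangle_ineq[of "g x - s x" "s x - f x"] s(3)[of x] by simp
      then show ?thesis using \<epsilon>2(1) by (simp add: ennreal_plus[symmetric] ennreal_leI del: ennreal_plus)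
    qed
    then have "(\<integral>\<^sup>+x. ennreal \<bar>g x - f x\<bar> \<partial>M) \<le> (\<integral>\<^sup>+x. ennreal \<bar>g x - s x\<bar> + ennreal (\<epsilon> / 2) \<partial>M)"
      by (intro nn_integral_mono)
    also have "\<dots> = (\<integral>\<^sup>+x. ennreal \<bar>g x - s x\<bar> \<partial>M) + ennreal (\<epsilon> / 2)"
      using gm s(1) emeasure_space_1 by (simp add: nn_integral_add)
    also have "\<dots> \<le> ennreal \<epsilon>" using that(2) \<epsilon>2(2) by (metis add_right_mono)
    finally show ?thesis .
  qed
  then show "\<exists>g. continuous_on UNIV g \<and> (\<integral>\<^sup>+x. ennreal \<bar>g x - f x\<bar> \<partial>\<eta>) \<le> ennreal \<epsilon> \<and>
      (\<integral>\<^sup>+x. ennreal \<bar>g x - f x\<bar> \<partial>\<kappa>) \<le> ennreal \<epsilon>"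
    using g \<eta>.real_distribution_axioms \<kappa>.real_distribution_axioms by blast
qed

text \<open>The step function \<open>\<delta> \<lfloor>f / \<delta>\<rfloor>\<close> is a finite combination of indicators of Borel sets.\<close>
lemma cont_L1_approx_bounded:
  assumes f: "f \<in> borel_measurable borel" and bnd: "\<And>x. \<bar>f x\<bar> \<le> C"
  shows "cont_L1_approx \<eta> \<kappa> f"
proof (rule cont_L1_approx_uniform_limit[OF f])
  fix \<delta> :: real assume \<delta>: "0 < \<delta>"
  define K :: int where "K = \<lceil>C / \<delta>\<rceil> + 1"
  define A where "A k = {x. \<lfloor>f x / \<delta>\<rfloor> = k}" for k :: int
  define s where "s x = (\<Sum>k\<in>{-K..K}. (\<delta> * real_of_int k) * indicator (A k) x)" for x
  have A_sets: "A k \<in> sets borel" for k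
  proof -
    have "A k = (\<lambda>x. f x / \<delta>) -` {real_of_int k ..< real_of_int k + 1} \<inter> space borel"
      unfolding A_def by (auto simp: floor_eq_iff)
    also have "\<dots> \<in> sets borel"
      by (rule measurable_sets[OF borel_measurable_divide[OF f borel_measurable_const]]) simp
    finally show ?thesis .
  qed
  have s_meas: "s \<in> borel_measurable borel" unfolding s_def using A_sets by measurable
  have "cont_L1_approx \<eta> \<kappa> s"
    unfolding s_def using A_sets
    by (intro cont_L1_approx_sum cont_L1_approx_cmult cont_L1_approx_indicator) auto
  moreover have "\<bar>s x - f x\<bar> \<le> \<delta>" for x
    unfolding s_def A_def K_def by (rule abs_floor_step_diff_le[where f=f and x=x, OF \<delta> bnd])
  ultimately show "\<exists>s. s \<in> borel_measurable borel \<and> cont_L1_approx \<eta> \<kappa> s \<and> (\<forall>x. \<bar>s x - f x\<bar> \<le> \<delta>)"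
    using s_meas by blast
qed

end

lemma abs_exp_diff_le:
  fixes a b C :: real
  assumes "\<bar>a\<bar> \<le> C" "\<bar>b\<bar> \<le> C"
  shows "\<bar>exp a - exp b\<bar> \<le> exp C * \<bar>a - b\<bar>"
proof -
  have le: "exp x - exp y \<le> exp C * (x - y)" if "y \<le> x" "\<bar>x\<bar> \<le> C" for x y :: real
  proof -
    have "exp x - exp y = exp x * (1 - exp (y - x))" by (simp add: algebra_simps exp_diff)
    also have "\<dots> \<le> exp x * (x - y)"
    proof (rule mult_left_mono)
      show "1 - exp (y - x) \<le> x - y" using exp_ge_add_one_self[of "y - x"] by linarith
    qed simp
    also have "\<dots> \<le> exp C * (x - y)" using that by (intro mult_right_mono) auto
    finally show ?thesis .
  qed
  show ?thesis
  proof (cases "b \<le> a")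
    case True
    then show ?thesis using le[OF True assms(1)] by (simp add: abs_if)
  next
    case False
    then show ?thesis using le[of a b] assms(2) by (simp add: abs_if abs_minus_commute)
  qed
qed

lemma (in real_distribution) integral_abs_diff_le:
  fixes f g :: "real \<Rightarrow> real"
  assumes "f \<in> borel_measurable borel" "g \<in> borel_measurable borel"
    and "\<And>x. \<bar>f x\<bar> \<le> C" "\<And>x. \<bar>g x\<bar> \<le> C"
    and "(\<integral>\<^sup>+x. ennreal \<bar>g x - f x\<bar> \<partial>M) \<le> ennreal e" "0 \<le> e"
  shows "(\<integral>x. \<bar>g x - f x\<bar> \<partial>M) \<le> e"
proof -
  have "\<bar>g x - f x\<bar> \<le> 2 * C" for x using assms(3,4)[of x] by linarith
  then have "integrable M (\<lambda>x. \<bar>g x - f x\<bar>)"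
    using assms(1,2) by (intro integrable_const_bound[where B="2 * C"]) simp_all
  then have "ennreal (\<integral>x. \<bar>g x - f x\<bar> \<partial>M) = (\<integral>\<^sup>+x. ennreal \<bar>g x - f x\<bar> \<partial>M)"
    by (rule nn_integral_eq_integral[symmetric]) simp
  with assms(5) have "ennreal (\<integral>x. \<bar>g x - f x\<bar> \<partial>M) \<le> ennreal e" by simp
  then show ?thesis using assms(6) by simp
qed

text \<open>The log-partition function is controlled via \<open>ln y - ln x \<le> (y - x) / x\<close> and the lower
  bound \<open>exp (- C)\<close> on the partition function.\<close>
lemma (in real_distribution) ln_integral_exp_L1_stable:
  fixes f g :: "real \<Rightarrow> real"
  assumes f: "f \<in> borel_measurable borel" "\<And>x. \<bar>f x\<bar> \<le> C"
    and g: "g \<in> borel_measurable borel" "\<And>x. \<bar>g x\<bar> \<le> C"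
    and close: "(\<integral>\<^sup>+x. ennreal \<bar>g x - f x\<bar> \<partial>M) \<le> ennreal e" and e: "0 \<le> e"
  shows "ln (\<integral>x. exp (g x) \<partial>M) \<le> ln (\<integral>x. exp (f x) \<partial>M) + exp (2 * C) * e"
proof -
  define Zf where "Zf = (\<integral>x. exp (f x) \<partial>M)"
  define Zg where "Zg = (\<integral>x. exp (g x) \<partial>M)"
  have Zf: "exp (- C) \<le> Zf" "0 < Zf" and Zg: "0 < Zg"
    unfolding Zf_def Zg_def using exp_neg_le_integral_exp[OF f] exp_neg_le_integral_exp[OF g]
    by (auto intro: less_le_trans[OF exp_gt_zero])
  have int_exp: "integrable M (\<lambda>x. exp (f x))" "integrable M (\<lambda>x. exp (g x))"
    using integrable_exp_bounded f g by blast+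
  have "Zg - Zf = (\<integral>x. exp (g x) - exp (f x) \<partial>M)" unfolding Zf_def Zg_def using int_exp by simp
  also have "\<dots> \<le> (\<integral>x. exp C * \<bar>g x - f x\<bar> \<partial>M)"
  proof (rule integral_mono)
    have "\<bar>g x - f x\<bar> \<le> 2 * C" for x using f(2)[of x] g(2)[of x] by linarith
    then have "integrable M (\<lambda>x. \<bar>g x - f x\<bar>)"
      using f(1) g(1) by (intro integrable_const_bound[where B="2 * C"]) simp_all
    then show "integrable M (\<lambda>x. exp C * \<bar>g x - f x\<bar>)" by simp
    show "exp (g x) - exp (f x) \<le> exp C * \<bar>g x - f x\<bar>" for x
      using abs_exp_diff_le[OF g(2) f(2), of x] by (simp add: abs_le_iff)
  qed (use int_exp in simp)
  also have "\<dots> = exp C * (\<integral>x. \<bar>g x - f x\<bar> \<partial>M)" by simp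
  also have "\<dots> \<le> exp C * e"
    using integral_abs_diff_le[OF f(1) g(1) f(2) g(2) close e] by simp
  finally have Zdiff: "Zg - Zf \<le> exp C * e" .
  have "ln Zg - ln Zf \<le> Zg / Zf - 1"
    using ln_le_minus_one[of "Zg / Zf"] Zf(2) Zg by (simp add: ln_div)
  also have "\<dots> = (Zg - Zf) * (1 / Zf)" using Zf(2) by (simp add: field_simps)
  also have "\<dots> \<le> exp C * e * exp C"
  proof (rule mult_mono)
    have "1 = exp (- C) * exp C" by (simp add: exp_add[symmetric])
    also have "\<dots> \<le> Zf * exp C" using Zf(1) by (intro mult_right_mono) auto
    finally show "1 / Zf \<le> exp C" using Zf(2) by (simp add: divide_le_eq mult.commute)
  qed (use Zdiff Zf(2) e in auto)
  also have "\<dots> = exp (2 * C) * e"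
    unfolding mult_2 exp_add by (simp only: ac_simps)
  finally show ?thesis unfolding Zf_def Zg_def by simp
qed

lemma (in real_distribution_pair) donsker_varadhan_L1_stable:
  assumes f: "f \<in> borel_measurable borel" "\<And>x. \<bar>f x\<bar> \<le> C"
    and g: "g \<in> borel_measurable borel" "\<And>x. \<bar>g x\<bar> \<le> C"
    and \<eta>_close: "(\<integral>\<^sup>+x. ennreal \<bar>g x - f x\<bar> \<partial>\<eta>) \<le> ennreal e"
    and \<kappa>_close: "(\<integral>\<^sup>+x. ennreal \<bar>g x - f x\<bar> \<partial>\<kappa>) \<le> ennreal e" and e: "0 \<le> e"
  shows "donsker_varadhan \<eta> \<kappa> f - (1 + exp (2 * C)) * e \<le> donsker_varadhan \<eta> \<kappa> g"
proof -
  have int_\<eta>: "integrable \<eta> f" "integrable \<eta> g"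
    using f g by (auto intro!: \<eta>.integrable_const_bound[where B=C])
  have "(\<integral>x. f x \<partial>\<eta>) - (\<integral>x. g x \<partial>\<eta>) = (\<integral>x. f x - g x \<partial>\<eta>)" using int_\<eta> by simp
  also have "\<dots> \<le> (\<integral>x. \<bar>g x - f x\<bar> \<partial>\<eta>)"
    by (intro integral_mono Bochner_Integration.integrable_diff integrable_abs int_\<eta>) auto
  also have "\<dots> \<le> e" by (rule \<eta>.integral_abs_diff_le[OF f(1) g(1) f(2) g(2) \<eta>_close e])
  finally show ?thesis
    using \<kappa>.ln_integral_exp_L1_stable[OF f g \<kappa>_close e]
    unfolding donsker_varadhan_def by (simp add: algebra_simps)
qed

lemma (in real_distribution_pair) donsker_varadhan_continuous_approx:
  assumes f: "f \<in> borel_measurable borel" "\<And>x. \<bar>f x\<bar> \<le> C" and \<epsilon>: "0 < \<epsilon>"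
  obtains g where "continuous_on UNIV g" "\<And>x. \<bar>g x\<bar> \<le> C"
    "donsker_varadhan \<eta> \<kappa> f - \<epsilon> < donsker_varadhan \<eta> \<kappa> g"
proof -
  define e where "e = \<epsilon> / (2 * (1 + exp (2 * C)))"
  have e: "0 < e" "(1 + exp (2 * C)) * e < \<epsilon>"
    unfolding e_def using \<epsilon> by (simp_all add: add_pos_pos field_simps)
  obtain g0 where g0: "continuous_on UNIV g0" "(\<integral>\<^sup>+x. ennreal \<bar>g0 x - f x\<bar> \<partial>\<eta>) \<le> ennreal e"
      "(\<integral>\<^sup>+x. ennreal \<bar>g0 x - f x\<bar> \<partial>\<kappa>) \<le> ennreal e"
    using cont_L1_approx_bounded[OF f] e(1) unfolding cont_L1_approx_def by blast
  \<comment> \<open>clipping \<open>g0\<close> to \<open>[-C, C]\<close> only brings it closer to \<open>f\<close>\<close>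
  define g where "g x = max (- C) (min C (g0 x))" for x
  have gc: "continuous_on UNIV g" unfolding g_def using g0(1) by (intro continuous_intros)
  have gb: "\<bar>g x\<bar> \<le> C" for x using f(2)[of x] unfolding g_def by auto
  have "\<bar>g x - f x\<bar> \<le> \<bar>g0 x - f x\<bar>" for x
  proof -
    have "- C \<le> f x" "f x \<le> C" using f(2)[of x] by linarith+
    then show ?thesis unfolding g_def by (auto simp: max_def min_def abs_if)
  qed
  then have closer: "(\<integral>\<^sup>+x. ennreal \<bar>g x - f x\<bar> \<partial>M) \<le> (\<integral>\<^sup>+x. ennreal \<bar>g0 x - f x\<bar> \<partial>M)" for M
    by (intro nn_integral_mono ennreal_leI)
  have "donsker_varadhan \<eta> \<kappa> f - (1 + exp (2 * C)) * e \<le> donsker_varadhan \<eta> \<kappa> g"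
    using gc gb order_trans[OF closer g0(2)] order_trans[OF closer g0(3)] e(1)
    by (intro donsker_varadhan_L1_stable[OF f]) (auto intro: borel_measurable_continuous_onI)
  then show ?thesis using that gc gb e(2) by (meson diff_strict_left_mono less_le_trans)
qed

section \<open>Lower semicontinuity of \<^const>\<open>KL\<close> and of its constrained infima\<close>

lemma donsker_varadhan_tendsto:
  assumes "weak_conv_cont \<eta>s \<eta>" "weak_conv_cont \<kappa>s \<kappa>" "real_distribution \<kappa>"
    and g: "continuous_on UNIV g" "\<And>x. \<bar>g x\<bar> \<le> C"
  shows "(\<lambda>n. donsker_varadhan (\<eta>s n) (\<kappa>s n) g) \<longlonglongrightarrow> donsker_varadhan \<eta> \<kappa> g"
proof -
  have "0 < (\<integral>x. exp (g x) \<partial>\<kappa>)"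
    using real_distribution.exp_neg_le_integral_exp[OF assms(3) borel_measurable_continuous_onI[OF g(1)] g(2)]
    by (meson exp_gt_zero less_le_trans)
  moreover have "continuous_on UNIV (\<lambda>x. exp (g x))" using g(1) by (intro continuous_intros)
  ultimately show ?thesis
    unfolding donsker_varadhan_def
    by (intro tendsto_diff tendsto_ln weak_conv_contD[OF assms(1) g(1)] weak_conv_contD[OF assms(2)]) auto
qed

text \<open>By the Donsker-Varadhan formula \<^const>\<open>KL\<close> is a supremum of functions that are continuous
  in \<open>(\<eta>, \<kappa>)\<close> for weak convergence.\<close>
theorem KL_lower_semicontinuous:
  assumes "weak_conv_cont \<eta>s \<eta>" "weak_conv_cont \<kappa>s \<kappa>"
    and "real_distribution \<eta>" "real_distribution \<kappa>"
    and "\<And>n. real_distribution (\<eta>s n)" "\<And>n. real_distribution (\<kappa>s n)"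
  shows "KL \<eta> \<kappa> \<le> liminf (\<lambda>n. KL (\<eta>s n) (\<kappa>s n))"
proof (rule dense_le)
  fix y assume y: "y < KL \<eta> \<kappa>"
  show "y \<le> liminf (\<lambda>n. KL (\<eta>s n) (\<kappa>s n))"
  proof (cases y)
    case (real c)
    interpret real_distribution_pair \<eta> \<kappa> by (intro real_distribution_pair.intro assms(3,4))
    obtain f C where f: "f \<in> borel_measurable borel" "\<And>x. \<bar>f x\<bar> \<le> C" "c < donsker_varadhan \<eta> \<kappa> f"
      using less_donsker_varadhan_of_less_KL y real by blast
    obtain g where g: "continuous_on UNIV g" "\<And>x. \<bar>g x\<bar> \<le> C" "c < donsker_varadhan \<eta> \<kappa> g"
      using donsker_varadhan_continuous_approx[OF f(1,2), of "donsker_varadhan \<eta> \<kappa> f - c"] f(3)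
      by auto
    have "ereal (donsker_varadhan (\<eta>s n) (\<kappa>s n) g) \<le> KL (\<eta>s n) (\<kappa>s n)" for n
      using g(1,2) assms(5,6)
      by (intro real_distribution_pair.donsker_varadhan_le_KL)
         (auto intro: real_distribution_pair.intro borel_measurable_continuous_onI)
    then have "liminf (\<lambda>n. ereal (donsker_varadhan (\<eta>s n) (\<kappa>s n) g)) \<le> liminf (\<lambda>n. KL (\<eta>s n) (\<kappa>s n))"
      by (intro Liminf_mono) simp
    moreover have "liminf (\<lambda>n. ereal (donsker_varadhan (\<eta>s n) (\<kappa>s n) g)) = ereal (donsker_varadhan \<eta> \<kappa> g)"
      using donsker_varadhan_tendsto[OF assms(1,2,4) g(1,2)] by (intro lim_imp_Liminf) simp_all
    ultimately have "ereal (donsker_varadhan \<eta> \<kappa> g) \<le> liminf (\<lambda>n. KL (\<eta>s n) (\<kappa>s n))" by simp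
    moreover have "y \<le> ereal (donsker_varadhan \<eta> \<kappa> g)" using g(3) real by simp
    ultimately show ?thesis by (rule order_trans[rotated])
  qed (use y in auto)
qed

text \<open>Near-minimisers have a weakly convergent subsequence by compactness of \<^const>\<open>P01\<close>; its
  limit satisfies the closed constraint and, by lower semicontinuity of \<^const>\<open>KL\<close>, is no
  worse.\<close>
lemma Inf_KL_lower_semicontinuous:
  fixes R :: "real measure \<Rightarrow> real \<Rightarrow> bool"
  assumes closed: "\<And>\<kappa>s \<kappa> \<nu>s \<nu>. weak_conv_cont \<kappa>s \<kappa> \<Longrightarrow> \<kappa> \<in> P01 \<Longrightarrow> (\<And>n. \<kappa>s n \<in> P01) \<Longrightarrow>
      (\<And>n. R (\<kappa>s n) (\<nu>s n)) \<Longrightarrow> \<nu>s \<longlonglongrightarrow> \<nu> \<Longrightarrow> R \<kappa> \<nu>"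
    and \<eta>: "\<eta> \<in> P01" "\<And>n. \<eta>s n \<in> P01" "weak_conv_cont \<eta>s \<eta>" and \<nu>: "\<nu>s \<longlonglongrightarrow> \<nu>"
  shows "Inf {KL \<eta> \<kappa> | \<kappa>. \<kappa> \<in> P01 \<and> R \<kappa> \<nu>}
    \<le> liminf (\<lambda>n. Inf {KL (\<eta>s n) \<kappa> | \<kappa>. \<kappa> \<in> P01 \<and> R \<kappa> (\<nu>s n)})"
    (is "?I \<le> liminf ?L")
proof (rule dense_ge)
  fix B assume B: "liminf ?L < B"
  show "?I \<le> B"
  proof (cases B)
    case (real b)
    obtain r where r: "strict_mono r" "(?L \<circ> r) \<longlonglongrightarrow> liminf ?L"
      using liminf_subseq_lim by blast
    obtain N where N: "\<And>k. N \<le> k \<Longrightarrow> ?L (r k) < ereal b"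
      using order_tendstoD(2)[OF r(2)] B real by (auto simp: eventually_sequentially)
    define r' where "r' k = r (k + N)" for k
    have r': "strict_mono r'" using r(1) unfolding r'_def strict_mono_def by simp
    have "\<exists>\<kappa>. \<kappa> \<in> P01 \<and> R \<kappa> (\<nu>s (r' k)) \<and> KL (\<eta>s (r' k)) \<kappa> < ereal b" for k
      using N[of "k + N"] unfolding r'_def by (auto simp: Inf_less_iff)
    then obtain \<kappa>s where \<kappa>s: "\<And>k. \<kappa>s k \<in> P01" "\<And>k. R (\<kappa>s k) (\<nu>s (r' k))"
      "\<And>k. KL (\<eta>s (r' k)) (\<kappa>s k) < ereal b" by metis
    obtain r2 \<kappa> where r2: "strict_mono r2" "\<kappa> \<in> P01" "weak_conv_cont (\<kappa>s \<circ> r2) \<kappa>"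
      using P01_sequentially_compact[of \<kappa>s] \<kappa>s(1) by blast
    have \<rho>: "strict_mono (r' \<circ> r2)" using r' r2(1) by (rule strict_mono_o)
    have "R \<kappa> \<nu>"
      using LIMSEQ_subseq_LIMSEQ[OF \<nu> \<rho>] \<kappa>s(1,2) by (intro closed[OF r2(3) r2(2)]) auto
    moreover have "KL \<eta> \<kappa> \<le> liminf (\<lambda>n. KL ((\<eta>s \<circ> (r' \<circ> r2)) n) ((\<kappa>s \<circ> r2) n))"
      using r2 \<eta> \<kappa>s(1)
      by (intro KL_lower_semicontinuous weak_conv_cont_subseq[OF \<eta>(3) \<rho>])
         (auto simp: P01_real_distribution o_def)
    moreover have "liminf (\<lambda>n. KL ((\<eta>s \<circ> (r' \<circ> r2)) n) ((\<kappa>s \<circ> r2) n)) \<le> ereal b"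
      using \<kappa>s(3) by (intro Liminf_le) (auto simp: less_imp_le)
    ultimately have "?I \<le> ereal b" using r2(2) by (intro Inf_lower2[of "KL \<eta> \<kappa>"]) auto
    then show ?thesis using real by simp
  qed (use B in auto)
qed

theorem mainTheorem10:
  fixes \<alpha> :: real
  assumes "0 < \<alpha>" and "\<alpha> < 1"
  shows "\<forall>\<eta> \<nu> (\<eta>s :: nat \<Rightarrow> real measure) (\<nu>s :: nat \<Rightarrow> real).
           \<eta> \<in> P01 \<and> \<nu> \<in> {0<..<1} \<and> (\<forall>n. \<eta>s n \<in> P01 \<and> \<nu>s n \<in> {0<..<1}) \<and>
           weak_conv01 \<eta>s \<eta> \<and> \<nu>s \<longlonglongrightarrow> \<nu> \<longrightarrow>
             KLinf_U \<alpha> \<eta> \<nu> \<le> liminf (\<lambda>n. KLinf_U \<alpha> (\<eta>s n) (\<nu>s n)) \<and>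
             KLinf_L \<alpha> \<eta> \<nu> \<le> liminf (\<lambda>n. KLinf_L \<alpha> (\<eta>s n) (\<nu>s n))"
proof (intro allI impI, elim conjE)
  fix \<eta> \<nu> and \<eta>s :: "nat \<Rightarrow> real measure" and \<nu>s :: "nat \<Rightarrow> real"
  assume \<eta>: "\<eta> \<in> P01" and \<eta>s: "\<forall>n. \<eta>s n \<in> P01 \<and> \<nu>s n \<in> {0<..<1}"
    and conv: "weak_conv01 \<eta>s \<eta>" "\<nu>s \<longlonglongrightarrow> \<nu>"
  have \<eta>s_P01: "\<And>n. \<eta>s n \<in> P01" using \<eta>s by blast
  note lsc = Inf_KL_lower_semicontinuous[OF _ \<eta> \<eta>s_P01 weak_conv01_imp_weak_conv_cont[OF conv(1) \<eta> \<eta>s_P01] conv(2)]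
  have "KLinf_U \<alpha> \<eta> \<nu> \<le> liminf (\<lambda>n. KLinf_U \<alpha> (\<eta>s n) (\<nu>s n))"
    unfolding KLinf_U_def
    by (rule lsc[where R="\<lambda>\<kappa> \<nu>. \<nu> \<le> EVaR \<alpha> \<kappa>"]) (rule le_EVaR_of_weak_conv[OF assms])
  moreover have "KLinf_L \<alpha> \<eta> \<nu> \<le> liminf (\<lambda>n. KLinf_L \<alpha> (\<eta>s n) (\<nu>s n))"
    unfolding KLinf_L_def
    by (rule lsc[where R="\<lambda>\<kappa> \<nu>. EVaR \<alpha> \<kappa> \<le> \<nu>"]) (rule EVaR_le_of_weak_conv[OF assms])
  ultimately show "KLinf_U \<alpha> \<eta> \<nu> \<le> liminf (\<lambda>n. KLinf_U \<alpha> (\<eta>s n) (\<nu>s n)) \<and>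
        KLinf_L \<alpha> \<eta> \<nu> \<le> liminf (\<lambda>n. KLinf_L \<alpha> (\<eta>s n) (\<nu>s n))" ..
qed

end
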